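(* Let $\Omega\subset\mathbb{R}^n$ ($n\ge2$) be a bounded domain with $C^2$ boundary and $f\in C^1(\mathbb{R})$. Let $u\in C^2(\overline\Omega)$ solve $-\Delta u=f(u)$ in $\Omega$, $\partial_\nu u=0$ on $\partial\Omega$, and let $a\ge1$. Then $$a\lambda_\gamma\ge(a-1)\lambda_0+\mu_{a\gamma}-\sup f'.$$
   Context: $\nu$ is the outward unit normal; $\gamma(x)=\inf_{X\in\nu(x)^\perp\setminus\{0\}} \frac{X\cdot\nabla\nu(x)\cdot X}{|X|^2}$ is the lowest principal curvature of $\partial\Omega$; $\sup f'=\sup_\mathbb{R}f'$. $\lambda_0:=\inf\{\int_\Omega|\nabla\psi|^2-\int_\Omega f'(u)\psi^2:\psi\in H^1(\Omega),\|\psi\|_{L^2}=1\}$; $\lambda_\gamma:=\inf\{\int_\Omega|\nabla\psi|^2-\int_\Omega f'(u)\psi^2+\int_{\partial\Omega}\gamma\psi^2:\psi\in H^1(\Omega),\|\psi\|_{L^2}=1\}$; for $a\ge0$, $\mu_{a\gamma}:=\inf\{\int_\Omega|\nabla\psi|^2+a\int_{\partial\Omega}\gamma\psi^2:\psi\in H^1(\Omega),\|\psi\|_{L^2}=1\}$. *)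

theory Defs
  imports "HOL-Analysis.Analysis"
begin

definition grad :: "('a::euclidean_space \<Rightarrow> real) \<Rightarrow> 'a \<Rightarrow> 'a" where
  "grad f x = (\<Sum>b\<in>Basis. frechet_derivative f (at x) b *\<^sub>R b)"

definition laplacian :: "('a::euclidean_space \<Rightarrow> real) \<Rightarrow> 'a \<Rightarrow> real" where
  "laplacian f x = (\<Sum>b\<in>Basis. frechet_derivative (grad f) (at x) b \<bullet> b)"

definition C2_on :: "'a::euclidean_space set \<Rightarrow> ('a \<Rightarrow> real) \<Rightarrow> bool" where
  "C2_on U f \<longleftrightarrow> (\<forall>x\<in>U. f differentiable (at x) \<and> grad f differentiable (at x))
     \<and> (\<forall>b\<in>Basis. continuous_on U (\<lambda>x. frechet_derivative (grad f) (at x) b))"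

definition C2_closure :: "'a::euclidean_space set \<Rightarrow> ('a \<Rightarrow> real) \<Rightarrow> bool" where
  "C2_closure \<Omega> u \<longleftrightarrow> continuous_on (closure \<Omega>) u
     \<and> (\<forall>x\<in>\<Omega>. u differentiable (at x) \<and> grad u differentiable (at x))
     \<and> (\<exists>G. continuous_on (closure \<Omega>) G \<and> (\<forall>x\<in>\<Omega>. G x = grad u x))
     \<and> (\<forall>b\<in>Basis. \<exists>H. continuous_on (closure \<Omega>) H
            \<and> (\<forall>x\<in>\<Omega>. H x = frechet_derivative (grad u) (at x) b))"

definition C1_closure :: "'a::euclidean_space set \<Rightarrow> ('a \<Rightarrow> real) \<Rightarrow> bool" where
  "C1_closure \<Omega> \<psi> \<longleftrightarrow> continuous_on (closure \<Omega>) \<psi>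
     \<and> (\<forall>x\<in>\<Omega>. \<psi> differentiable (at x))
     \<and> (\<exists>G. continuous_on (closure \<Omega>) G \<and> (\<forall>x\<in>\<Omega>. G x = grad \<psi> x))"

definition domain :: "'a::euclidean_space set \<Rightarrow> bool" where
  "domain \<Omega> \<longleftrightarrow> open \<Omega> \<and> connected \<Omega> \<and> \<Omega> \<noteq> {}"

text \<open>rho is a C^2 local defining function of Omega near its boundary.
  A bounded domain has C^2 boundary iff such a rho exists.\<close>
definition C2_defining_function :: "'a::euclidean_space set \<Rightarrow> ('a \<Rightarrow> real) \<Rightarrow> bool" where
  "C2_defining_function \<Omega> \<rho> \<longleftrightarrow> (\<exists>U. open U \<and> frontier \<Omega> \<subseteq> U \<and> C2_on U \<rho>
     \<and> (\<forall>x\<in>U. x \<in> \<Omega> \<longleftrightarrow> \<rho> x < 0)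
     \<and> (\<forall>x\<in>frontier \<Omega>. \<rho> x = 0 \<and> grad \<rho> x \<noteq> 0))"

text \<open>Outward unit normal (extended to a neighbourhood of the boundary by grad rho / |grad rho|).\<close>
definition normal :: "('a::euclidean_space \<Rightarrow> real) \<Rightarrow> 'a \<Rightarrow> 'a" where
  "normal \<rho> x = (1 / norm (grad \<rho> x)) *\<^sub>R grad \<rho> x"

definition lowest_curvature :: "('a::euclidean_space \<Rightarrow> real) \<Rightarrow> 'a \<Rightarrow> real" where
  "lowest_curvature \<rho> x = Inf {(X \<bullet> frechet_derivative (normal \<rho>) (at x) X) / (norm X)\<^sup>2 | X.
        X \<bullet> normal \<rho> x = 0 \<and> X \<noteq> 0}"

definition hausdorff_approx :: "nat \<Rightarrow> real \<Rightarrow> 'a::euclidean_space set \<Rightarrow> ennreal" where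
  "hausdorff_approx d \<delta> A = (INF C \<in> {C :: nat \<Rightarrow> 'a set. A \<subseteq> (\<Union>i. C i)
        \<and> (\<forall>i. bounded (C i) \<and> diameter (C i) \<le> \<delta>)}.
      (\<Sum>i. ennreal (unit_ball_vol (real d) * (diameter (C i) / 2) ^ d)))"

definition hausdorff_measure :: "nat \<Rightarrow> 'a::euclidean_space set \<Rightarrow> ennreal" where
  "hausdorff_measure d A = (SUP \<delta> \<in> {0<..}. hausdorff_approx d \<delta> A)"

definition surface_measure :: "'a::euclidean_space set \<Rightarrow> 'a measure" where
  "surface_measure \<Omega> = measure_of (frontier \<Omega>) {A \<in> sets borel. A \<subseteq> frontier \<Omega>}
      (hausdorff_measure (DIM('a) - 1))"

text \<open>Test class: C^1(closure Omega), dense in H^1(Omega).\<close>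

definition lambda0 :: "'a::euclidean_space set \<Rightarrow> (real \<Rightarrow> real) \<Rightarrow> ('a \<Rightarrow> real) \<Rightarrow> real" where
  "lambda0 \<Omega> f u = Inf {(LINT x:\<Omega>|lborel. (norm (grad \<psi> x))\<^sup>2)
        - (LINT x:\<Omega>|lborel. deriv f (u x) * (\<psi> x)\<^sup>2) | \<psi>.
        C1_closure \<Omega> \<psi> \<and> (LINT x:\<Omega>|lborel. (\<psi> x)\<^sup>2) = 1}"

definition lambda_gamma :: "'a::euclidean_space set \<Rightarrow> ('a \<Rightarrow> real) \<Rightarrow> (real \<Rightarrow> real)
    \<Rightarrow> ('a \<Rightarrow> real) \<Rightarrow> real" where
  "lambda_gamma \<Omega> \<rho> f u = Inf {(LINT x:\<Omega>|lborel. (norm (grad \<psi> x))\<^sup>2)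
        - (LINT x:\<Omega>|lborel. deriv f (u x) * (\<psi> x)\<^sup>2)
        + (LINT x|surface_measure \<Omega>. lowest_curvature \<rho> x * (\<psi> x)\<^sup>2) | \<psi>.
        C1_closure \<Omega> \<psi> \<and> (LINT x:\<Omega>|lborel. (\<psi> x)\<^sup>2) = 1}"

definition mu_gamma :: "real \<Rightarrow> 'a::euclidean_space set \<Rightarrow> ('a \<Rightarrow> real) \<Rightarrow> real" where
  "mu_gamma a \<Omega> \<rho> = Inf {(LINT x:\<Omega>|lborel. (norm (grad \<psi> x))\<^sup>2)
        + a * (LINT x|surface_measure \<Omega>. lowest_curvature \<rho> x * (\<psi> x)\<^sup>2) | \<psi>.
        C1_closure \<Omega> \<psi> \<and> (LINT x:\<Omega>|lborel. (\<psi> x)\<^sup>2) = 1}"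

end

theory Submission
  imports Defs
begin

text \<open>
  For every admissible \<open>\<psi>\<close> write \<open>E = \<integral>\<^sub>\<Omega> |\<nabla>\<psi>|\<^sup>2\<close>, \<open>P = \<integral>\<^sub>\<Omega> f'(u) \<psi>\<^sup>2\<close> and
  \<open>B = \<integral>\<^sub>\<partial>\<^sub>\<Omega> \<gamma> \<psi>\<^sup>2\<close>. Then \<open>a (E - P + B) = (a - 1) (E - P) + (E + a B) - P\<close> and
  \<open>P \<le> sup f'\<close>, so the inequality holds for each \<open>\<psi>\<close> and passes to the infima.

  The work lies in showing that the infimum defining \<open>\<mu>\<^sub>a\<^sub>\<gamma>\<close> is taken over a set bounded
  below (the infimum of an unbounded set of reals is unspecified). The curvature satisfies
  \<open>\<gamma> \<ge> -K\<close> on the compact boundary, and the trace inequality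
  \<open>\<integral>\<^sub>\<partial>\<^sub>\<Omega> \<psi>\<^sup>2 \<le> C (h \<integral>\<^sub>\<Omega> |\<nabla>\<psi>|\<^sup>2 + h\<^sup>-\<^sup>1 \<integral>\<^sub>\<Omega> \<psi>\<^sup>2)\<close> for small \<open>h\<close> absorbs the
  boundary term. The trace inequality is proved locally: near a boundary point \<open>\<partial>\<Omega>\<close> is a
  Lipschitz graph over a coordinate hyperplane. Cut that hyperplane into a grid of cells of
  side \<open>s\<close>; the part of \<open>\<partial>\<Omega>\<close> over a cell has Hausdorff measure \<open>O(s\<^sup>n\<^sup>-\<^sup>1)\<close>, and \<open>\<psi>\<^sup>2\<close>
  at a point of it is bounded, by a discrete one-dimensional trace inequality along the
  inward segment, by averages of \<open>|\<nabla>\<psi>|\<^sup>2\<close> and \<open>\<psi>\<^sup>2\<close> over a column of disjoint cubes of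
  side \<open>s\<close> inside \<open>\<Omega>\<close>.
\<close>

section \<open>Integrals over a bounded domain\<close>

lemma has_derivative_grad:
  fixes f :: "'a::euclidean_space \<Rightarrow> real"
  assumes "f differentiable (at x)"
  shows "(f has_derivative (\<lambda>v. grad f x \<bullet> v)) (at x)"
proof -
  let ?L = "frechet_derivative f (at x)"
  have d: "(f has_derivative ?L) (at x)" using assms frechet_derivative_works by blast
  then have lin: "linear ?L" using has_derivative_linear by blast
  have "?L v = grad f x \<bullet> v" for v
  proof -
    have "?L v = ?L (\<Sum>b\<in>Basis. (v \<bullet> b) *\<^sub>R b)" by (simp add: euclidean_representation)
    also have "\<dots> = (\<Sum>b\<in>Basis. (v \<bullet> b) * ?L b)"
      using lin by (simp add: linear_sum linear_cmul)
    also have "\<dots> = grad f x \<bullet> v"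
      unfolding grad_def by (simp add: inner_sum_right inner_commute mult.commute)
    finally show ?thesis .
  qed
  then have "?L = (\<lambda>v. grad f x \<bullet> v)" by auto
  with d show ?thesis by simp
qed

lemma frontier_subset_closure: "frontier S \<subseteq> closure S"
  by (simp add: frontier_def)

lemma set_integral_nonneg:
  fixes f :: "'a \<Rightarrow> real"
  assumes "\<And>x. x \<in> A \<Longrightarrow> 0 \<le> f x"
  shows "0 \<le> (LINT x:A|M. f x)"
  unfolding set_lebesgue_integral_def using assms
  by (intro Bochner_Integration.integral_nonneg_AE) (auto simp: indicator_def)

lemma set_integrable_continuous_on_closure:
  fixes \<Omega> :: "'a::euclidean_space set" and g :: "'a \<Rightarrow> real"
  assumes "open \<Omega>" "bounded \<Omega>" "continuous_on (closure \<Omega>) g"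
  shows "set_integrable lborel \<Omega> g"
proof -
  have "compact (closure \<Omega>)" using assms(2) by (simp add: compact_closure)
  then obtain B where B: "\<forall>x\<in>closure \<Omega>. norm (g x) \<le> B"
    using assms(3) compact_continuous_image compact_imp_bounded bounded_iff
    by (metis image_eqI)
  have m: "\<Omega> \<in> sets lborel" using assms(1) by simp
  have cont: "continuous_on \<Omega> g" using assms(3) closure_subset continuous_on_subset by blast
  have meas: "(\<lambda>x. indicat_real \<Omega> x *\<^sub>R g x) \<in> borel_measurable lborel"
    using borel_measurable_continuous_on_indicator[OF _ cont] assms(1) by simp
  have fin: "emeasure lborel \<Omega> < \<infinity>"
    using assms(2) emeasure_bounded_finite by blast
  show ?thesis unfolding set_integrable_def
    by (rule integrableI_bounded_set[where B=B, OF m meas fin])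
       (use B closure_subset in \<open>auto simp: indicator_def\<close>)
qed

lemma exists_normalized_C1_closure:
  fixes \<Omega> :: "'a::euclidean_space set"
  assumes "domain \<Omega>" "bounded \<Omega>"
  shows "\<exists>\<psi>. C1_closure \<Omega> \<psi> \<and> (LINT x:\<Omega>|lborel. (\<psi> x)\<^sup>2) = 1"
proof -
  have op: "open \<Omega>" and ne: "\<Omega> \<noteq> {}" using assms(1) by (auto simp: domain_def)
  obtain x0 where "x0 \<in> \<Omega>" using ne by blast
  then obtain r where r: "r > 0" "ball x0 r \<subseteq> \<Omega>" using op open_contains_ball by blast
  have fin: "emeasure lborel \<Omega> < \<infinity>" using assms(2) emeasure_bounded_finite by blast
  have "measure lborel (ball x0 r) \<le> measure lborel \<Omega>"
    using r fin op by (intro measure_mono_fmeasurable) (auto simp: fmeasurable_def)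
  moreover have "measure lborel (ball x0 r) > 0" using content_ball_pos[OF r(1)] by simp
  ultimately have v: "measure lborel \<Omega> > 0" by linarith
  define c where "c = 1 / sqrt (measure lborel \<Omega>)"
  have "C1_closure \<Omega> (\<lambda>_. c)"
    unfolding C1_closure_def grad_def
    by (auto simp: frechet_derivative_const intro!: exI[of _ "\<lambda>_. 0"])
  moreover have "(LINT x:\<Omega>|lborel. ((\<lambda>_. c) x)\<^sup>2) = 1"
    using set_integral_const[of \<Omega> lborel "c\<^sup>2"] op fin v
    by (simp add: c_def power_divide)
  ultimately show ?thesis by blast
qed

lemma set_integral_weight_sq_le:
  fixes \<Omega> :: "'a::euclidean_space set" and q \<psi> :: "'a \<Rightarrow> real"
  assumes op: "open \<Omega>" and bd: "bounded \<Omega>"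
    and q: "continuous_on (closure \<Omega>) q" and psi: "continuous_on (closure \<Omega>) \<psi>"
    and S: "\<And>x. x \<in> \<Omega> \<Longrightarrow> q x \<le> S"
  shows "(LINT x:\<Omega>|lborel. q x * (\<psi> x)\<^sup>2) \<le> S * (LINT x:\<Omega>|lborel. (\<psi> x)\<^sup>2)"
proof -
  have int: "set_integrable lborel \<Omega> (\<lambda>x. (\<psi> x)\<^sup>2)"
    by (rule set_integrable_continuous_on_closure[OF op bd]) (intro continuous_intros psi)
  have "(LINT x:\<Omega>|lborel. q x * (\<psi> x)\<^sup>2) \<le> (LINT x:\<Omega>|lborel. S * (\<psi> x)\<^sup>2)"
  proof (rule set_integral_mono)
    show "set_integrable lborel \<Omega> (\<lambda>x. q x * (\<psi> x)\<^sup>2)"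
      by (rule set_integrable_continuous_on_closure[OF op bd]) (intro continuous_intros q psi)
    show "set_integrable lborel \<Omega> (\<lambda>x. S * (\<psi> x)\<^sup>2)" using int by (rule set_integrable_mult_right)
  qed (use S in \<open>auto intro: mult_right_mono\<close>)
  then show ?thesis by simp
qed

lemma nn_integral_indicator_eq_set_integral:
  assumes "set_integrable M \<Omega> f" "\<And>x. x \<in> \<Omega> \<Longrightarrow> 0 \<le> f x"
  shows "(\<integral>\<^sup>+x. ennreal (f x) * indicator \<Omega> x \<partial>M) = ennreal (LINT x:\<Omega>|M. f x)"
proof -
  have "(\<integral>\<^sup>+x. ennreal (indicat_real \<Omega> x *\<^sub>R f x) \<partial>M) = ennreal (integral\<^sup>L M (\<lambda>x. indicat_real \<Omega> x *\<^sub>R f x))"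
    using assms(1) unfolding set_integrable_def
    by (rule nn_integral_eq_integral) (use assms(2) in \<open>auto simp: indicator_def\<close>)
  moreover have "(\<lambda>x. ennreal (indicat_real \<Omega> x *\<^sub>R f x)) = (\<lambda>x. ennreal (f x) * indicator \<Omega> x)"
    by (rule ext) (auto simp: indicator_def)
  ultimately show ?thesis unfolding set_lebesgue_integral_def by simp
qed

lemma sum_emeasure_le_set_integral:
  fixes A :: "'i \<Rightarrow> 'a set" and c :: "'i \<Rightarrow> real" and \<Phi> :: "'a \<Rightarrow> real"
  assumes I: "finite I" and A: "\<And>j. j \<in> I \<Longrightarrow> A j \<in> sets M"
    and disj: "disjoint_family_on A I"
    and bound: "\<And>j z. j \<in> I \<Longrightarrow> z \<in> A j \<Longrightarrow> z \<in> \<Omega> \<and> c j \<le> \<Phi> z"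
    and int: "set_integrable M \<Omega> \<Phi>" and nonneg: "\<And>z. z \<in> \<Omega> \<Longrightarrow> 0 \<le> \<Phi> z"
  shows "(\<Sum>j\<in>I. ennreal (c j) * emeasure M (A j)) \<le> ennreal (LINT z:\<Omega>|M. \<Phi> z)"
proof -
  have pointwise: "(\<Sum>j\<in>I. ennreal (c j) * indicator (A j) z) \<le> ennreal (\<Phi> z) * indicator \<Omega> z" for z
  proof (cases "\<exists>j\<in>I. z \<in> A j")
    case True
    then obtain j where j: "j \<in> I" "z \<in> A j" by blast
    have "z \<notin> A j'" if "j' \<in> I" "j' \<noteq> j" for j'
      using disjoint_family_onD[OF disj j(1) that(1)] that(2) j(2) by blast
    then have "(\<Sum>j'\<in>I. ennreal (c j') * indicator (A j') z) = (\<Sum>j'\<in>I. if j' = j then ennreal (c j) else 0)"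
      using j(2) by (intro sum.cong) auto
    also have "\<dots> = ennreal (c j)" using I j(1) by simp
    finally show ?thesis using bound[OF j] by (simp add: ennreal_leI)
  next
    case False
    then have "(\<Sum>j\<in>I. ennreal (c j) * indicator (A j) z) = 0" by (intro sum.neutral) auto
    then show ?thesis by simp
  qed
  have "(\<Sum>j\<in>I. ennreal (c j) * emeasure M (A j)) = (\<Sum>j\<in>I. \<integral>\<^sup>+z. ennreal (c j) * indicator (A j) z \<partial>M)"
    using A by (intro sum.cong refl nn_integral_cmult_indicator[symmetric])
  also have "\<dots> = (\<integral>\<^sup>+z. (\<Sum>j\<in>I. ennreal (c j) * indicator (A j) z) \<partial>M)"
    by (rule nn_integral_sum[symmetric]) (use A in measurable)
  also have "\<dots> \<le> (\<integral>\<^sup>+z. ennreal (\<Phi> z) * indicator \<Omega> z \<partial>M)"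
    by (intro nn_integral_mono pointwise)
  also have "\<dots> = ennreal (LINT z:\<Omega>|M. \<Phi> z)"
    by (rule nn_integral_indicator_eq_set_integral[OF int nonneg])
  finally show ?thesis .
qed

lemma nn_integral_le_sum_cover:
  fixes f :: "'a \<Rightarrow> ennreal"
  assumes P: "finite P" and A: "\<And>p. p \<in> P \<Longrightarrow> A p \<in> sets M"
    and cover: "space M \<subseteq> (\<Union>p\<in>P. A p)" and f: "f \<in> borel_measurable M"
  shows "(\<integral>\<^sup>+x. f x \<partial>M) \<le> (\<Sum>p\<in>P. \<integral>\<^sup>+x. f x * indicator (A p) x \<partial>M)"
proof -
  have "(\<integral>\<^sup>+x. f x \<partial>M) \<le> (\<integral>\<^sup>+x. (\<Sum>p\<in>P. f x * indicator (A p) x) \<partial>M)"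
  proof (rule nn_integral_mono)
    fix x assume "x \<in> space M"
    then obtain p where "p \<in> P" "x \<in> A p" using cover by blast
    then show "f x \<le> (\<Sum>p\<in>P. f x * indicator (A p) x)"
      using member_le_sum[of p P "\<lambda>p. f x * indicator (A p) x"] P by simp
  qed
  also have "\<dots> = (\<Sum>p\<in>P. \<integral>\<^sup>+x. f x * indicator (A p) x \<partial>M)"
    by (rule nn_integral_sum) (use A f in measurable)
  finally show ?thesis .
qed

lemma integrable_of_nn_integral_le:
  fixes g :: "'a \<Rightarrow> real"
  assumes meas: "g \<in> borel_measurable M" and nonneg: "\<And>x. 0 \<le> g x"
    and le: "(\<integral>\<^sup>+x. ennreal (g x) \<partial>M) \<le> ennreal c" and c: "0 \<le> c"
  shows "integrable M g" "(\<integral>x. g x \<partial>M) \<le> c"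
proof -
  show int: "integrable M g"
    by (rule integrableI_bounded[OF meas]) (use le nonneg in \<open>auto intro: order.strict_trans1\<close>)
  have "ennreal (\<integral>x. g x \<partial>M) \<le> ennreal c"
    using nn_integral_eq_integral[OF int] nonneg le by simp
  then show "(\<integral>x. g x \<partial>M) \<le> c" using c by (simp add: ennreal_le_iff)
qed

lemma integral_mult_ge_neg_bound:
  fixes \<gamma> g :: "'a \<Rightarrow> real"
  assumes int: "integrable M g" and g0: "\<And>x. x \<in> space M \<Longrightarrow> 0 \<le> g x"
    and \<gamma>: "\<And>x. x \<in> space M \<Longrightarrow> - K \<le> \<gamma> x" and K: "0 \<le> K"
  shows "- K * (\<integral>x. g x \<partial>M) \<le> (\<integral>x. \<gamma> x * g x \<partial>M)"
proof (cases "integrable M (\<lambda>x. \<gamma> x * g x)")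
  case True
  have "(\<integral>x. - K * g x \<partial>M) \<le> (\<integral>x. \<gamma> x * g x \<partial>M)"
  proof (intro integral_mono True integrable_mult_right int)
    fix x assume x: "x \<in> space M"
    show "- K * g x \<le> \<gamma> x * g x" using mult_right_mono[OF \<gamma>[OF x] g0[OF x]] .
  qed
  then show ?thesis by simp
next
  case False
  have "0 \<le> (\<integral>x. g x \<partial>M)" by (rule integral_nonneg_AE) (use g0 in \<open>auto intro!: AE_I2\<close>)
  then show ?thesis using False K by (simp add: not_integrable_integral_eq)
qed

lemma continuous_on_compact_uniformly_close:
  fixes g :: "'a::metric_space \<Rightarrow> real"
  assumes "compact S" "continuous_on S g" "\<eta> > 0"
  shows "\<exists>\<delta>>0. \<forall>x\<in>S. \<forall>y\<in>S. dist y x < \<delta> \<longrightarrow> g y \<le> g x + \<eta>"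
proof -
  have "uniformly_continuous_on S g" by (rule compact_uniformly_continuous[OF assms(2,1)])
  then obtain \<delta> where "\<delta> > 0" "\<forall>x\<in>S. \<forall>y\<in>S. dist y x < \<delta> \<longrightarrow> dist (g y) (g x) < \<eta>"
    using assms(3) unfolding uniformly_continuous_on_def by metis
  then show ?thesis by (force simp: dist_real_def abs_less_iff)
qed

section \<open>Surface measure\<close>

lemma sets_surface_measure:
  fixes \<Omega> :: "'a::euclidean_space set"
  shows "sets (surface_measure \<Omega>) = sets (restrict_space borel (frontier \<Omega>))"
    and "space (surface_measure \<Omega>) = frontier \<Omega>"
proof -
  have Fb: "frontier \<Omega> \<in> sets borel" by (simp add: frontier_closed)
  have eq: "{A \<in> sets borel. A \<subseteq> frontier \<Omega>} = sets (restrict_space borel (frontier \<Omega>))"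
    using sets_restrict_space_iff[of "frontier \<Omega>" borel] Fb by auto
  have sa: "sigma_algebra (frontier \<Omega>) (sets (restrict_space borel (frontier \<Omega>)))"
    using sets.sigma_algebra_axioms[of "restrict_space borel (frontier \<Omega>)"] by simp
  have sub: "{A \<in> sets borel. A \<subseteq> frontier \<Omega>} \<subseteq> Pow (frontier \<Omega>)" by auto
  show "sets (surface_measure \<Omega>) = sets (restrict_space borel (frontier \<Omega>))"
    unfolding surface_measure_def sets_measure_of[OF sub]
    using sigma_algebra.sigma_sets_eq[OF sa] eq by simp
  show "space (surface_measure \<Omega>) = frontier \<Omega>"
    unfolding surface_measure_def using space_measure_of[OF sub] by simp
qed

lemma borel_measurable_surface_measure:
  fixes \<Omega> :: "'a::euclidean_space set" and g :: "'a \<Rightarrow> real"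
  assumes "continuous_on (frontier \<Omega>) g"
  shows "g \<in> borel_measurable (surface_measure \<Omega>)"
proof -
  have "g \<in> borel_measurable (restrict_space borel (frontier \<Omega>))"
    using borel_measurable_continuous_on_restrict[OF assms] .
  then show ?thesis
    using measurable_cong_sets[OF sets_surface_measure(1) refl] by blast
qed

lemma emeasure_surface_measure_le_hausdorff:
  fixes \<Omega> :: "'a::euclidean_space set"
  shows "emeasure (surface_measure \<Omega>) A \<le> hausdorff_measure (DIM('a) - 1) A"
  unfolding surface_measure_def emeasure_measure_of_conv by auto

lemma hausdorff_approx_le_finite_cover:
  fixes A :: "'a::euclidean_space set" and C :: "'i \<Rightarrow> 'a set"
  assumes I: "finite I" and cover: "A \<subseteq> (\<Union>i\<in>I. C i)"
    and bounded: "\<And>i. bounded (C i)" and diam: "\<And>i. diameter (C i) \<le> \<epsilon>"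
    and \<epsilon>: "0 \<le> \<epsilon>" "\<epsilon> \<le> \<delta>" and d: "d \<ge> 1"
  shows "hausdorff_approx d \<delta> A \<le> ennreal (real (card I) * unit_ball_vol (real d) * (\<epsilon> / 2) ^ d)"
proof -
  obtain enum where enum: "bij_betw enum {..<card I} I"
    using ex_bij_betw_nat_finite[OF I] atLeast0LessThan by metis
  define C' where "C' n = (if n < card I then C (enum n) else {})" for n
  have "A \<subseteq> (\<Union>n. C' n)"
  proof
    fix x assume "x \<in> A"
    then obtain i where "i \<in> I" "x \<in> C i" using cover by blast
    then obtain n where "n < card I" "enum n = i"
      using enum unfolding bij_betw_def by (metis imageE lessThan_iff)
    then show "x \<in> (\<Union>n. C' n)" using \<open>x \<in> C i\<close> by (auto simp: C'_def)
  qed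
  moreover have "bounded (C' n)" "diameter (C' n) \<le> \<delta>" for n
    using bounded diam \<epsilon> by (auto simp: C'_def intro: order.trans)
  ultimately have "hausdorff_approx d \<delta> A \<le> (\<Sum>n. ennreal (unit_ball_vol (real d) * (diameter (C' n) / 2) ^ d))"
    unfolding hausdorff_approx_def by (intro INF_lower) auto
  also have "\<dots> = (\<Sum>n<card I. ennreal (unit_ball_vol (real d) * (diameter (C' n) / 2) ^ d))"
    by (rule suminf_finite) (use d in \<open>auto simp: C'_def\<close>)
  also have "\<dots> \<le> (\<Sum>n<card I. ennreal (unit_ball_vol (real d) * (\<epsilon> / 2) ^ d))"
  proof (intro sum_mono ennreal_leI mult_left_mono power_mono)
    show "diameter (C' n) / 2 \<le> \<epsilon> / 2" "0 \<le> diameter (C' n) / 2" for n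
      using diam diameter_ge_0[OF bounded] \<epsilon> by (auto simp: C'_def)
  qed simp
  also have "\<dots> = ennreal (real (card I) * unit_ball_vol (real d) * (\<epsilon> / 2) ^ d)"
    using \<epsilon> by (simp add: ennreal_of_nat_eq_real_of_nat ennreal_mult' mult.assoc)
  finally show ?thesis .
qed

text \<open>For an \<open>L\<close>-Lipschitz graph over a coordinate hyperplane in \<open>\<real>\<^sup>n\<close>, the part lying over
  a grid cell of side \<open>s\<close> has diameter at most \<open>(1 + L) n s\<close>; this constant times \<open>s\<^sup>n\<^sup>-\<^sup>1\<close>
  bounds its \<open>(n-1)\<close>-dimensional Hausdorff measure.\<close>

definition graph_cell_const :: "nat \<Rightarrow> real \<Rightarrow> real" where
  "graph_cell_const n L = unit_ball_vol (real (n - 1)) * ((1 + L) * real n / 2) ^ (n - 1)"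

lemma graph_cell_const_nonneg: "0 \<le> L \<Longrightarrow> 0 \<le> graph_cell_const n L"
  by (simp add: graph_cell_const_def)

section \<open>A lower bound for the boundary curvature\<close>

lemma C2_defining_functionE:
  assumes "C2_defining_function \<Omega> \<rho>"
  obtains U where "open U" "frontier \<Omega> \<subseteq> U" "C2_on U \<rho>" "\<forall>x\<in>U. x \<in> \<Omega> \<longleftrightarrow> \<rho> x < 0"
    "\<forall>x\<in>frontier \<Omega>. \<rho> x = 0 \<and> grad \<rho> x \<noteq> 0"
  using assms unfolding C2_defining_function_def by blast

lemma norm_linear_le_sum_Basis:
  fixes L :: "'a::euclidean_space \<Rightarrow> 'b::real_normed_vector"
  assumes "linear L"
  shows "norm (L v) \<le> norm v * (\<Sum>b\<in>Basis. norm (L b))"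
proof -
  have "L v = (\<Sum>b\<in>Basis. (v \<bullet> b) *\<^sub>R L b)"
    using assms by (metis (no_types, lifting) euclidean_representation linear_cmul linear_sum sum.cong)
  then have "norm (L v) = norm (\<Sum>b\<in>Basis. (v \<bullet> b) *\<^sub>R L b)" by simp
  also have "\<dots> \<le> (\<Sum>b\<in>Basis. norm ((v \<bullet> b) *\<^sub>R L b))" by (rule norm_sum)
  also have "\<dots> \<le> (\<Sum>b\<in>Basis. norm v * norm (L b))"
    by (intro sum_mono) (auto intro!: mult_right_mono simp: Basis_le_norm)
  finally show ?thesis by (simp add: sum_distrib_left)
qed

lemma exists_nonzero_orthogonal:
  fixes n :: "'a::euclidean_space"
  assumes "DIM('a) \<ge> 2"
  shows "\<exists>X. X \<bullet> n = 0 \<and> X \<noteq> 0"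
proof -
  obtain b1 :: 'a where b1: "b1 \<in> Basis" using nonempty_Basis by blast
  have "card (Basis - {b1}) \<ge> 1" using assms b1 by (simp add: card_Diff_singleton)
  then obtain b2 :: 'a where b2: "b2 \<in> Basis" "b2 \<noteq> b1"
    by (metis Diff_iff card_0_eq ex_in_conv finite_Basis finite_Diff insertI1 not_one_le_zero)
  show ?thesis
  proof (cases "n \<bullet> b1 = 0 \<and> n \<bullet> b2 = 0")
    case True
    then show ?thesis using b1 by (intro exI[of _ b1]) (auto simp: inner_commute)
  next
    case False
    let ?X = "(n \<bullet> b2) *\<^sub>R b1 - (n \<bullet> b1) *\<^sub>R b2"
    have "?X \<bullet> n = (n \<bullet> b2) * (b1 \<bullet> n) - (n \<bullet> b1) * (b2 \<bullet> n)" by (simp add: inner_diff_left)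
    then have "?X \<bullet> n = 0" by (simp add: inner_commute)
    moreover have "?X \<bullet> b1 = n \<bullet> b2" "?X \<bullet> b2 = - (n \<bullet> b1)"
      using b1 b2 by (auto simp: inner_diff_left inner_Basis)
    then have "?X \<noteq> 0" using False by auto
    ultimately show ?thesis by blast
  qed
qed

lemma lowest_curvature_ge:
  fixes \<rho> :: "'a::euclidean_space \<Rightarrow> real"
  assumes dim: "DIM('a) \<ge> 2"
    and bound: "\<And>X. norm (frechet_derivative (normal \<rho>) (at x) X) \<le> K * norm X"
  shows "- K \<le> lowest_curvature \<rho> x"
  unfolding lowest_curvature_def
proof (rule cInf_greatest)
  show "{(X \<bullet> frechet_derivative (normal \<rho>) (at x) X) / (norm X)\<^sup>2 | X. X \<bullet> normal \<rho> x = 0 \<and> X \<noteq> 0} \<noteq> {}"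
    using exists_nonzero_orthogonal[OF dim, of "normal \<rho> x"] by blast
  fix y
  assume "y \<in> {(X \<bullet> frechet_derivative (normal \<rho>) (at x) X) / (norm X)\<^sup>2 | X. X \<bullet> normal \<rho> x = 0 \<and> X \<noteq> 0}"
  then obtain X where X: "X \<noteq> 0" "y = (X \<bullet> frechet_derivative (normal \<rho>) (at x) X) / (norm X)\<^sup>2"
    by auto
  have "\<bar>X \<bullet> frechet_derivative (normal \<rho>) (at x) X\<bar> \<le> norm X * norm (frechet_derivative (normal \<rho>) (at x) X)"
    by (rule Cauchy_Schwarz_ineq2)
  also have "\<dots> \<le> norm X * (K * norm X)" by (intro mult_left_mono bound) auto
  finally have "- (K * (norm X)\<^sup>2) \<le> X \<bullet> frechet_derivative (normal \<rho>) (at x) X"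
    by (simp add: power2_eq_square algebra_simps)
  moreover have "(norm X)\<^sup>2 > 0" using X by simp
  ultimately show "- K \<le> y" using X by (simp add: le_divide_eq)
qed

lemma norm_frechet_derivative_normal_le:
  fixes \<rho> :: "'a::euclidean_space \<Rightarrow> real"
  assumes dg: "grad \<rho> differentiable (at x)" and m0: "0 < m0" "m0 \<le> norm (grad \<rho> x)"
    and B: "0 \<le> B" "\<And>v. norm (frechet_derivative (grad \<rho>) (at x) v) \<le> B * norm v"
  shows "norm (frechet_derivative (normal \<rho>) (at x) h) \<le> 2 * B / m0 * norm h"
proof -
  define g where "g = grad \<rho>"
  let ?Dg = "frechet_derivative g (at x)"
  have Dg: "(g has_derivative ?Dg) (at x)" using dg frechet_derivative_works unfolding g_def by blast
  have gx: "g x \<noteq> 0" using m0 by (auto simp: g_def)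
  have dn: "((\<lambda>y. norm (g y)) has_derivative (\<lambda>h. ?Dg h \<bullet> sgn (g x))) (at x)"
    using has_derivative_compose[OF Dg has_derivative_norm[OF gx]] by simp
  have di: "((\<lambda>y. inverse (norm (g y))) has_derivative
      (\<lambda>h. - (inverse (norm (g x)) * (?Dg h \<bullet> sgn (g x)) * inverse (norm (g x))))) (at x)"
    by (rule Deriv.has_derivative_inverse[OF _ dn]) (use gx in simp)
  define L where "L h = inverse (norm (g x)) *\<^sub>R ?Dg h
      + (- (inverse (norm (g x)) * (?Dg h \<bullet> sgn (g x)) * inverse (norm (g x)))) *\<^sub>R g x" for h
  have "((\<lambda>y. inverse (norm (g y)) *\<^sub>R g y) has_derivative L) (at x)"
    unfolding L_def using has_derivative_scaleR[OF di Dg] by (simp add: add.commute)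
  moreover have "normal \<rho> = (\<lambda>y. inverse (norm (g y)) *\<^sub>R g y)"
    by (rule ext) (simp add: normal_def g_def divide_inverse)
  ultimately have FD: "frechet_derivative (normal \<rho>) (at x) = L"
    using frechet_derivative_at by metis
  have "norm (L h) \<le> norm (inverse (norm (g x)) *\<^sub>R ?Dg h)
      + norm ((inverse (norm (g x)) * (?Dg h \<bullet> sgn (g x)) * inverse (norm (g x))) *\<^sub>R g x)"
    unfolding L_def by (metis norm_minus_cancel norm_triangle_ineq scaleR_minus_left)
  also have "\<dots> = norm (?Dg h) / norm (g x) + \<bar>?Dg h \<bullet> sgn (g x)\<bar> / norm (g x)"
    using gx by (simp add: field_simps abs_mult)
  also have "\<dots> \<le> 2 * norm (?Dg h) / norm (g x)"
  proof -
    have "\<bar>?Dg h \<bullet> sgn (g x)\<bar> \<le> norm (?Dg h)"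
      using Cauchy_Schwarz_ineq2[of "?Dg h" "sgn (g x)"] gx by (simp add: norm_sgn)
    then show ?thesis using gx by (simp add: field_simps)
  qed
  also have "\<dots> \<le> 2 * (B * norm h) / m0"
    using B(2)[of h] m0 B(1) by (intro frac_le) (auto simp: g_def)
  finally show ?thesis by (simp add: FD)
qed

lemma lowest_curvature_bounded_below:
  fixes \<Omega> :: "'a::euclidean_space set" and \<rho> :: "'a \<Rightarrow> real"
  assumes dim: "DIM('a) \<ge> 2" and bd: "bounded \<Omega>" and C2d: "C2_defining_function \<Omega> \<rho>"
  shows "\<exists>K\<ge>0. \<forall>x\<in>frontier \<Omega>. lowest_curvature \<rho> x \<ge> - K"
proof -
  obtain U where U: "open U" "frontier \<Omega> \<subseteq> U" "C2_on U \<rho>" "\<forall>x\<in>frontier \<Omega>. \<rho> x = 0 \<and> grad \<rho> x \<noteq> 0"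
    using C2_defining_functionE[OF C2d] by metis
  define F where "F = frontier \<Omega>"
  have cF: "compact F" unfolding F_def using bd
    by (meson bounded_closure bounded_subset compact_eq_bounded_closed frontier_closed frontier_subset_closure)
  have gd: "grad \<rho> differentiable (at x)" if "x \<in> F" for x
    using U that unfolding C2_on_def F_def by blast
  have gF: "continuous_on F (grad \<rho>)"
    by (rule continuous_at_imp_continuous_on) (use gd differentiable_imp_continuous_within in blast)
  show ?thesis
  proof (cases "F = {}")
    case True
    then show ?thesis by (auto simp: F_def)
  next
    case False
    obtain x0 where x0: "x0 \<in> F" "\<forall>x\<in>F. norm (grad \<rho> x0) \<le> norm (grad \<rho> x)"
      using continuous_attains_inf[OF cF False, of "\<lambda>x. norm (grad \<rho> x)"] gF
      by (auto intro: continuous_intros)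
    define m0 where "m0 = norm (grad \<rho> x0)"
    have m0: "m0 > 0" "\<forall>x\<in>F. m0 \<le> norm (grad \<rho> x)" using x0 U(4) by (auto simp: m0_def F_def)
    define \<phi> where "\<phi> x = (\<Sum>b\<in>Basis. norm (frechet_derivative (grad \<rho>) (at x) b))" for x
    have "continuous_on U \<phi>"
      unfolding \<phi>_def using U(3) unfolding C2_on_def by (intro continuous_intros) auto
    then have "continuous_on F \<phi>" using U(2) F_def continuous_on_subset by blast
    then have "bounded (\<phi> ` F)" using cF compact_continuous_image compact_imp_bounded by blast
    then obtain B where B: "\<forall>x\<in>F. norm (\<phi> x) \<le> B" by (auto simp: bounded_iff)
    have B0: "B \<ge> 0" using B x0(1) by (meson norm_ge_zero order.trans)
    have "- (2 * B / m0) \<le> lowest_curvature \<rho> x" if x: "x \<in> F" for x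
    proof (rule lowest_curvature_ge[OF dim norm_frechet_derivative_normal_le[OF gd[OF x] m0(1) _ B0]])
      show "m0 \<le> norm (grad \<rho> x)" using m0(2) x by blast
      have "linear (frechet_derivative (grad \<rho>) (at x))"
        using gd[OF x] frechet_derivative_works has_derivative_linear by blast
      then have Dg: "norm (frechet_derivative (grad \<rho>) (at x) v) \<le> norm v * \<phi> x" for v
        unfolding \<phi>_def by (rule norm_linear_le_sum_Basis)
      have "\<phi> x \<le> B" using B x by (fastforce simp: abs_le_iff)
      then show "norm (frechet_derivative (grad \<rho>) (at x) v) \<le> B * norm v" for v
        using Dg[of v] mult_left_mono[of "\<phi> x" B "norm v"] by (simp add: mult.commute)
    qed
    then show ?thesis using B0 m0 unfolding F_def by (intro exI[of _ "2 * B / m0"]) auto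
  qed
qed

section \<open>A discrete trace inequality\<close>

lemma le_average_plus_variation:
  fixes f :: "nat \<Rightarrow> real"
  assumes J: "J \<ge> 1"
  shows "f 0 \<le> (\<Sum>i<J. f (Suc i)) / real J + (\<Sum>i<J. \<bar>f i - f (Suc i)\<bar>)"
proof -
  define V where "V = (\<Sum>i<J. \<bar>f i - f (Suc i)\<bar>)"
  have telescope: "f 0 \<le> f j + (\<Sum>i<j. \<bar>f i - f (Suc i)\<bar>)" for j
    by (induction j) (auto simp: abs_if)
  have "f 0 \<le> f (Suc j) + V" if "j < J" for j
  proof -
    have "(\<Sum>i<Suc j. \<bar>f i - f (Suc i)\<bar>) \<le> V" unfolding V_def using that by (intro sum_mono2) auto
    then show ?thesis using telescope[of "Suc j"] by linarith
  qed
  then have "(\<Sum>i<J. f 0) \<le> (\<Sum>i<J. f (Suc i) + V)" by (intro sum_mono) auto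
  then have "real J * f 0 \<le> (\<Sum>i<J. f (Suc i)) + real J * V" by (simp add: sum.distrib)
  then show ?thesis using J by (simp add: V_def field_simps)
qed

lemma mult_abs_le_amgm:
  fixes g q h :: real
  assumes "h > 0" "g \<ge> 0"
  shows "g * \<bar>q\<bar> \<le> (h/2) * g\<^sup>2 + (1/(2*h)) * q\<^sup>2"
proof -
  have "0 \<le> (h * g - \<bar>q\<bar>)\<^sup>2" by simp
  then have "2 * h * g * \<bar>q\<bar> \<le> h\<^sup>2 * g\<^sup>2 + q\<^sup>2" by (simp add: power2_eq_square algebra_simps)
  then show ?thesis using assms by (simp add: field_simps power2_eq_square)
qed

lemma abs_diff_power2_le:
  fixes p q g h s :: real
  assumes d: "\<bar>p - q\<bar> \<le> s * g" and g: "0 \<le> g" and h: "0 < h" and s: "0 < s"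
  shows "\<bar>p\<^sup>2 - q\<^sup>2\<bar> \<le> s * ((h/2) * g\<^sup>2 + (1/h) * p\<^sup>2 + (1/h) * q\<^sup>2)"
proof -
  have "\<bar>p\<^sup>2 - q\<^sup>2\<bar> = \<bar>p - q\<bar> * \<bar>p + q\<bar>"
    by (simp add: power2_eq_square abs_mult[symmetric] algebra_simps)
  also have "\<dots> \<le> s * (g * \<bar>p + q\<bar>)" using mult_right_mono[OF d abs_ge_zero] by (simp add: mult.assoc)
  also have "\<dots> \<le> s * ((h/2) * g\<^sup>2 + (1/(2*h)) * (p + q)\<^sup>2)"
    using mult_abs_le_amgm[OF h g] s by (intro mult_left_mono) auto
  also have "(1/(2*h)) * (p + q)\<^sup>2 \<le> (1/h) * p\<^sup>2 + (1/h) * q\<^sup>2"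
  proof -
    have "(p + q)\<^sup>2 \<le> 2 * p\<^sup>2 + 2 * q\<^sup>2"
      using sum_squares_ge_zero[of "p - q" 0] by (simp add: power2_eq_square algebra_simps)
    then show ?thesis using h by (simp add: field_simps)
  qed
  then have "s * ((h/2) * g\<^sup>2 + (1/(2*h)) * (p + q)\<^sup>2) \<le> s * ((h/2) * g\<^sup>2 + (1/h) * p\<^sup>2 + (1/h) * q\<^sup>2)"
    using s by (intro mult_left_mono) auto
  finally show ?thesis .
qed

lemma discrete_trace_inequality:
  fixes p g :: "nat \<Rightarrow> real" and s h :: real and J :: nat
  assumes J: "J \<ge> 1" and s: "s > 0" and h: "h = real J * s"
    and d: "\<And>i. i < J \<Longrightarrow> \<bar>p i - p (Suc i)\<bar> \<le> s * g i" and g: "\<And>i. g i \<ge> 0"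
  shows "(p 0)\<^sup>2 \<le> (\<Sum>i<J. s * ((h/2) * (g i)\<^sup>2 + (1/h) * (p i)\<^sup>2 + (2/h) * (p (Suc i))\<^sup>2))"
proof -
  have hpos: "h > 0" using J s h by simp
  have "(p 0)\<^sup>2 \<le> (\<Sum>i<J. (p (Suc i))\<^sup>2) / real J + (\<Sum>i<J. \<bar>(p i)\<^sup>2 - (p (Suc i))\<^sup>2\<bar>)"
    by (rule le_average_plus_variation[OF J])
  moreover have "(\<Sum>i<J. (p (Suc i))\<^sup>2) / real J = (\<Sum>i<J. s * ((1/h) * (p (Suc i))\<^sup>2))"
    using J s by (simp add: h sum_divide_distrib)
  moreover have "(\<Sum>i<J. \<bar>(p i)\<^sup>2 - (p (Suc i))\<^sup>2\<bar>)
      \<le> (\<Sum>i<J. s * ((h/2) * (g i)\<^sup>2 + (1/h) * (p i)\<^sup>2 + (1/h) * (p (Suc i))\<^sup>2))"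
    using d g hpos s by (intro sum_mono abs_diff_power2_le) auto
  moreover have "(\<Sum>i<J. s * ((1/h) * (p (Suc i))\<^sup>2))
      + (\<Sum>i<J. s * ((h/2) * (g i)\<^sup>2 + (1/h) * (p i)\<^sup>2 + (1/h) * (p (Suc i))\<^sup>2))
      = (\<Sum>i<J. s * ((h/2) * (g i)\<^sup>2 + (1/h) * (p i)\<^sup>2 + (2/h) * (p (Suc i))\<^sup>2))"
    by (simp add: sum.distrib[symmetric] algebra_simps)
  ultimately show ?thesis by linarith
qed

section \<open>Coordinate cubes and grids\<close>

definition coord_cube :: "'a::euclidean_space \<Rightarrow> real \<Rightarrow> 'a set" where
  "coord_cube x0 r = box (x0 - r *\<^sub>R One) (x0 + r *\<^sub>R One)"

lemma mem_coord_cube: "z \<in> coord_cube x0 r \<longleftrightarrow> (\<forall>i\<in>Basis. \<bar>(z - x0) \<bullet> i\<bar> < r)"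
  unfolding coord_cube_def mem_box by (auto simp: inner_diff_left abs_less_iff algebra_simps)

lemma convex_coord_cube: "convex (coord_cube x0 r)" unfolding coord_cube_def by (rule convex_box)

lemma open_coord_cube: "open (coord_cube x0 r)" unfolding coord_cube_def by (rule open_box)

lemma coord_cube_subset_ball: "coord_cube x0 r \<subseteq> ball x0 (real DIM('a) * r)" for x0 :: "'a::euclidean_space"
proof
  fix z assume z: "z \<in> coord_cube x0 r"
  have "norm (z - x0) \<le> (\<Sum>i\<in>Basis. \<bar>(z - x0) \<bullet> i\<bar>)" by (rule norm_le_l1)
  also have "\<dots> < (\<Sum>i\<in>(Basis::'a set). r)"
    using z unfolding mem_coord_cube by (intro sum_strict_mono) auto
  also have "\<dots> = real DIM('a) * r" by simp
  finally show "z \<in> ball x0 (real DIM('a) * r)" by (simp add: dist_norm norm_minus_commute)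
qed

lemma coord_cube_mono: assumes "r1 \<le> r2" shows "coord_cube x0 r1 \<subseteq> coord_cube x0 r2"
proof
  fix z assume "z \<in> coord_cube x0 r1"
  then have "\<forall>i\<in>Basis. \<bar>(z - x0) \<bullet> i\<bar> < r1" by (simp add: mem_coord_cube)
  then have "\<forall>i\<in>Basis. \<bar>(z - x0) \<bullet> i\<bar> < r2" using assms by force
  then show "z \<in> coord_cube x0 r2" by (simp add: mem_coord_cube)
qed

lemma card_Basis_remove: "b \<in> (Basis::'a::euclidean_space set) \<Longrightarrow> card (Basis - {b}) = DIM('a) - 1"
  by (simp add: card_Diff_singleton)

definition grid_index :: "'a::euclidean_space \<Rightarrow> real \<Rightarrow> 'a \<Rightarrow> 'a \<Rightarrow> int" where
  "grid_index b s x = restrict (\<lambda>i. \<lfloor>(x \<bullet> i) / s\<rfloor>) (Basis - {b})"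

lemma finite_grid_index_image:
  fixes S :: "'a::euclidean_space set"
  assumes "bounded S" "s > 0"
  shows "finite (grid_index b s ` S)"
proof -
  obtain B where B: "\<forall>x\<in>S. norm x \<le> B" using assms(1) bounded_iff by blast
  define R where "R = \<lceil>B / s\<rceil>"
  have "grid_index b s x \<in> (\<Pi>\<^sub>E j\<in>Basis - {b}. {-R..R})" if x: "x \<in> S" for x
    unfolding grid_index_def restrict_PiE_iff
  proof
    fix j assume j: "j \<in> Basis - {b}"
    have "\<bar>x \<bullet> j\<bar> \<le> B" using B x j Basis_le_norm[of j x] by (meson DiffD1 order.trans)
    then have "\<bar>(x \<bullet> j) / s\<bar> \<le> B / s" using assms(2) by (simp add: abs_divide divide_right_mono)
    then have "- (B / s) \<le> (x \<bullet> j) / s" "(x \<bullet> j) / s \<le> B / s" by linarith+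
    then show "\<lfloor>(x \<bullet> j) / s\<rfloor> \<in> {-R..R}" unfolding R_def
      by (simp add: ceiling_le_iff le_floor_iff) linarith
  qed
  then show ?thesis by (rule finite_subset[OF image_subsetI]) (auto intro!: finite_PiE)
qed

lemma floor_eq_imp_abs_diff_less:
  assumes h: "\<lfloor>a::real\<rfloor> = \<lfloor>a'\<rfloor>" shows "\<bar>a - a'\<bar> < 1"
proof -
  have "real_of_int \<lfloor>a\<rfloor> \<le> a" "a < real_of_int \<lfloor>a\<rfloor> + 1" by linarith+
  moreover have "real_of_int \<lfloor>a\<rfloor> \<le> a'" "a' < real_of_int \<lfloor>a\<rfloor> + 1" unfolding h by linarith+
  ultimately show ?thesis unfolding abs_less_iff by linarith
qed

lemma int_cell_unique:
  fixes s y :: real and k k' :: int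
  assumes "s > 0" "s * k < y" "y < s * k + s" "s * k' < y" "y < s * k' + s"
  shows "k = k'"
proof -
  have "real_of_int k < y / s" "y / s < real_of_int k + 1" "real_of_int k' < y / s" "y / s < real_of_int k' + 1"
    using assms by (auto simp: field_simps)
  then have "real_of_int k < real_of_int k' + 1" "real_of_int k' < real_of_int k + 1" by linarith+
  then show ?thesis by linarith
qed

lemma exists_grid_step:
  fixes h c \<mu> :: real
  assumes "0 < h" "0 < \<mu>"
  obtains J :: nat where "J \<ge> 1" "c * (h / real J) < \<mu>"
proof -
  define J :: nat where "J = nat \<lceil>h * c / \<mu>\<rceil> + 1"
  have "h * c / \<mu> < real J" unfolding J_def by linarith
  then have "c * h < \<mu> * real J" using assms by (simp add: pos_divide_less_eq mult.commute)
  moreover have "J \<ge> 1" by (simp add: J_def)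
  ultimately show ?thesis using that by (simp add: pos_divide_less_eq)
qed

definition perp_part :: "'a::euclidean_space \<Rightarrow> 'a \<Rightarrow> 'a" where
  "perp_part b v = v - (v \<bullet> b) *\<^sub>R b"

lemma norm_perp_part_le:
  fixes b v :: "'a::euclidean_space"
  assumes "b \<in> Basis"
  shows "norm (perp_part b v) \<le> (\<Sum>i\<in>Basis - {b}. \<bar>v \<bullet> i\<bar>)"
proof -
  have "perp_part b v = (\<Sum>i\<in>Basis. (v \<bullet> i) *\<^sub>R i) - (v \<bullet> b) *\<^sub>R b"
    unfolding perp_part_def by (simp add: euclidean_representation)
  also have "\<dots> = (\<Sum>i\<in>Basis - {b}. (v \<bullet> i) *\<^sub>R i)"
    using assms by (simp add: sum_diff1)
  finally have "norm (perp_part b v) = norm (\<Sum>i\<in>Basis - {b}. (v \<bullet> i) *\<^sub>R i)" by simp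
  also have "\<dots> \<le> (\<Sum>i\<in>Basis - {b}. norm ((v \<bullet> i) *\<^sub>R i))" by (rule norm_sum)
  also have "\<dots> = (\<Sum>i\<in>Basis - {b}. \<bar>v \<bullet> i\<bar>)" by (intro sum.cong) auto
  finally show ?thesis .
qed

lemma norm_le_perp_part:
  fixes b v :: "'a::euclidean_space"
  assumes "b \<in> Basis"
  shows "norm v \<le> norm (perp_part b v) + \<bar>v \<bullet> b\<bar>"
proof -
  have "v = perp_part b v + (v \<bullet> b) *\<^sub>R b" by (simp add: perp_part_def)
  then have "norm v \<le> norm (perp_part b v) + norm ((v \<bullet> b) *\<^sub>R b)" by (metis norm_triangle_ineq)
  then show ?thesis using assms by simp
qed

definition boundary_cell :: "'a::euclidean_space set \<Rightarrow> 'a \<Rightarrow> 'a \<Rightarrow> real \<Rightarrow> real \<Rightarrow> ('a \<Rightarrow> int) \<Rightarrow> 'a set" where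
  "boundary_cell F b x0 r s k = {x \<in> F \<inter> coord_cube x0 (r/2). grid_index b s x = k}"

lemma sets_boundary_cell:
  fixes \<Omega> :: "'a::euclidean_space set"
  assumes "k \<in> extensional (Basis - {b})"
  shows "boundary_cell (frontier \<Omega>) b x0 r s k \<in> sets (surface_measure \<Omega>)"
proof -
  have e: "{x. grid_index b s x = k} = {x::'a. \<forall>j\<in>Basis - {b}. \<lfloor>(x \<bullet> j) / s\<rfloor> = k j}"
  proof (intro set_eqI iffI)
    fix x assume "x \<in> {x. grid_index b s x = k}"
    then show "x \<in> {x::'a. \<forall>j\<in>Basis - {b}. \<lfloor>(x \<bullet> j) / s\<rfloor> = k j}"
      unfolding grid_index_def by (auto simp: restrict_def split: if_splits)
  next
    fix x assume x: "x \<in> {x::'a. \<forall>j\<in>Basis - {b}. \<lfloor>(x \<bullet> j) / s\<rfloor> = k j}"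
    have "grid_index b s x = k" unfolding grid_index_def
      by (rule extensionalityI[OF _ assms]) (use x in auto)
    then show "x \<in> {x. grid_index b s x = k}" by simp
  qed
  have b1: "{x::'a. \<forall>j\<in>Basis - {b}. \<lfloor>(x \<bullet> j) / s\<rfloor> = k j} \<in> sets borel" by measurable
  have b2: "coord_cube x0 (r/2) \<in> sets borel" by (simp add: open_coord_cube)
  have "boundary_cell (frontier \<Omega>) b x0 r s k = frontier \<Omega> \<inter> (coord_cube x0 (r/2) \<inter> {x. grid_index b s x = k})"
    unfolding boundary_cell_def by auto
  moreover have "frontier \<Omega> \<inter> (coord_cube x0 (r/2) \<inter> {x. grid_index b s x = k}) \<in> sets (restrict_space borel (frontier \<Omega>))"
    using b1 b2 e by (subst sets_restrict_space_iff) auto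
  ultimately show ?thesis by (metis sets_surface_measure(1))
qed

text \<open>\<open>column_cube b \<sigma> x k s T\<close> is the open cube of side \<open>s\<close> lying over the grid cell \<open>k\<close>
  of the hyperplane \<open>b\<^sup>\<bottom>\<close>, at depth between \<open>T\<close> and \<open>T + s\<close> below \<open>x\<close> in the direction \<open>-\<sigma> b\<close>.\<close>

definition column_corner :: "'a::euclidean_space \<Rightarrow> real \<Rightarrow> 'a \<Rightarrow> ('a \<Rightarrow> int) \<Rightarrow> real \<Rightarrow> real \<Rightarrow> 'a" where
  "column_corner b \<sigma> x k s T = (\<Sum>j\<in>Basis. (if j = b then x \<bullet> b - \<sigma> * T - (1 + \<sigma>) / 2 * s else s * real_of_int (k j)) *\<^sub>R j)"

definition column_cube :: "'a::euclidean_space \<Rightarrow> real \<Rightarrow> 'a \<Rightarrow> ('a \<Rightarrow> int) \<Rightarrow> real \<Rightarrow> real \<Rightarrow> 'a set" where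
  "column_cube b \<sigma> x k s T = box (column_corner b \<sigma> x k s T) (column_corner b \<sigma> x k s T + s *\<^sub>R One)"

lemma inner_column_corner:
  assumes "j \<in> Basis"
  shows "column_corner b \<sigma> x k s T \<bullet> j = (if j = b then x \<bullet> b - \<sigma> * T - (1 + \<sigma>) / 2 * s else s * real_of_int (k j))"
proof -
  have "column_corner b \<sigma> x k s T \<bullet> j = (\<Sum>j'\<in>Basis. (if j' = b then x \<bullet> b - \<sigma> * T - (1 + \<sigma>) / 2 * s else s * real_of_int (k j')) * (j' \<bullet> j))"
    unfolding column_corner_def by (simp add: inner_sum_left)
  also have "\<dots> = (\<Sum>j'\<in>Basis. if j' = j then (if j' = b then x \<bullet> b - \<sigma> * T - (1 + \<sigma>) / 2 * s else s * real_of_int (k j')) else 0)"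
    using assms by (intro sum.cong) (auto simp: inner_Basis)
  also have "\<dots> = (if j = b then x \<bullet> b - \<sigma> * T - (1 + \<sigma>) / 2 * s else s * real_of_int (k j))"
    using assms by (simp add: sum.delta')
  finally show ?thesis .
qed

lemma mem_column_cube:
  fixes b :: "'a::euclidean_space"
  assumes b: "b \<in> Basis" and \<sigma>: "\<sigma> = 1 \<or> \<sigma> = -1"
  shows "z \<in> column_cube b \<sigma> x k s T \<longleftrightarrow> (\<forall>j\<in>Basis - {b}. s * real_of_int (k j) < z \<bullet> j \<and> z \<bullet> j < s * real_of_int (k j) + s)
     \<and> T < \<sigma> * (x \<bullet> b - z \<bullet> b) \<and> \<sigma> * (x \<bullet> b - z \<bullet> b) < T + s"
proof -
  have "z \<in> column_cube b \<sigma> x k s T \<longleftrightarrow> (\<forall>j\<in>Basis. column_corner b \<sigma> x k s T \<bullet> j < z \<bullet> j \<and> z \<bullet> j < column_corner b \<sigma> x k s T \<bullet> j + s)"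
    unfolding column_cube_def mem_box by (simp add: inner_add_left)
  also have "\<dots> \<longleftrightarrow> (\<forall>j\<in>Basis - {b}. s * real_of_int (k j) < z \<bullet> j \<and> z \<bullet> j < s * real_of_int (k j) + s)
     \<and> (x \<bullet> b - \<sigma> * T - (1 + \<sigma>) / 2 * s < z \<bullet> b \<and> z \<bullet> b < x \<bullet> b - \<sigma> * T - (1 + \<sigma>) / 2 * s + s)"
    using b by (auto simp: inner_column_corner)
  also have "(x \<bullet> b - \<sigma> * T - (1 + \<sigma>) / 2 * s < z \<bullet> b \<and> z \<bullet> b < x \<bullet> b - \<sigma> * T - (1 + \<sigma>) / 2 * s + s)
      \<longleftrightarrow> (T < \<sigma> * (x \<bullet> b - z \<bullet> b) \<and> \<sigma> * (x \<bullet> b - z \<bullet> b) < T + s)"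
    using \<sigma> by (auto simp: algebra_simps)
  finally show ?thesis .
qed

lemma emeasure_column_cube:
  fixes b :: "'a::euclidean_space"
  assumes "s > 0"
  shows "emeasure lborel (column_cube b \<sigma> x k s T) = ennreal (s ^ DIM('a))"
  unfolding column_cube_def using assms by (simp add: inner_add_left)

lemma column_cubes_disjoint:
  fixes b :: "'a::euclidean_space"
  assumes b: "b \<in> Basis" and \<sigma>: "\<sigma> = 1 \<or> \<sigma> = -1" and s: "s > 0"
    and k: "k \<in> extensional (Basis - {b})" and k': "k' \<in> extensional (Basis - {b})"
    and z: "z \<in> column_cube b \<sigma> x k s (D + real i * s)" and z': "z \<in> column_cube b \<sigma> x' k' s (D + real i' * s)"
  shows "k = k' \<and> (x = x' \<longrightarrow> i = i')"
proof
  have A: "\<forall>j\<in>Basis - {b}. s * real_of_int (k j) < z \<bullet> j \<and> z \<bullet> j < s * real_of_int (k j) + s"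
    "D + real i * s < \<sigma> * (x \<bullet> b - z \<bullet> b)" "\<sigma> * (x \<bullet> b - z \<bullet> b) < D + real i * s + s"
    using z mem_column_cube[OF b \<sigma>] by auto
  have B: "\<forall>j\<in>Basis - {b}. s * real_of_int (k' j) < z \<bullet> j \<and> z \<bullet> j < s * real_of_int (k' j) + s"
    "D + real i' * s < \<sigma> * (x' \<bullet> b - z \<bullet> b)" "\<sigma> * (x' \<bullet> b - z \<bullet> b) < D + real i' * s + s"
    using z' mem_column_cube[OF b \<sigma>] by auto
  show "k = k'"
  proof (rule extensionalityI[OF k k'])
    fix j assume "j \<in> Basis - {b}"
    then show "k j = k' j" using A(1) B(1) int_cell_unique[OF s] by blast
  qed
  show "x = x' \<longrightarrow> i = i'"
  proof
    assume "x = x'"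
    then have "s * real i < \<sigma> * (x \<bullet> b - z \<bullet> b) - D" "\<sigma> * (x \<bullet> b - z \<bullet> b) - D < s * real i + s"
      "s * real i' < \<sigma> * (x \<bullet> b - z \<bullet> b) - D" "\<sigma> * (x \<bullet> b - z \<bullet> b) - D < s * real i' + s"
      using A(2,3) B(2,3) by (auto simp: algebra_simps)
    then have "int i = int i'" using int_cell_unique[OF s, of "int i" _ "int i'"] by simp
    then show "i = i'" by simp
  qed
qed

lemma disjoint_family_on_column_cubes:
  fixes b :: "'a::euclidean_space"
  assumes b: "b \<in> Basis" and \<sigma>: "\<sigma> = 1 \<or> \<sigma> = -1" and s: "s > 0"
    and xk: "\<And>k. k \<in> K \<Longrightarrow> grid_index b s (xk k) = k"
  shows "disjoint_family_on (\<lambda>(k, i). column_cube b \<sigma> (xk k) k s (D + real i * s)) (K \<times> I)"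
  unfolding disjoint_family_on_def
proof (intro ballI impI)
  fix p q assume "p \<in> K \<times> I" "q \<in> K \<times> I" "p \<noteq> q"
  then obtain k i k' i' where pq: "p = (k, i)" "q = (k', i')" "k \<in> K" "k' \<in> K" "(k, i) \<noteq> (k', i')"
    by blast
  have ext: "k \<in> extensional (Basis - {b})" if "k \<in> K" for k
    using xk[OF that] unfolding grid_index_def by (metis restrict_extensional)
  show "(\<lambda>(k, i). column_cube b \<sigma> (xk k) k s (D + real i * s)) p
      \<inter> (\<lambda>(k, i). column_cube b \<sigma> (xk k) k s (D + real i * s)) q = {}"
  proof (rule equals0I)
    fix z assume "z \<in> (\<lambda>(k, i). column_cube b \<sigma> (xk k) k s (D + real i * s)) p
        \<inter> (\<lambda>(k, i). column_cube b \<sigma> (xk k) k s (D + real i * s)) q"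
    then have "k = k' \<and> (xk k = xk k' \<longrightarrow> i = i')"
      using column_cubes_disjoint[OF b \<sigma> s ext[OF pq(3)] ext[OF pq(4)]] by (auto simp: pq)
    then show False using pq(5) by auto
  qed
qed

lemma column_cube_decomposition:
  fixes b :: "'a::euclidean_space"
  assumes b: "b \<in> Basis" and \<sigma>: "\<sigma> = 1 \<or> \<sigma> = -1" and s: "s > 0"
    and z: "z \<in> column_cube b \<sigma> x (grid_index b s x) s T"
  obtains \<tau> w where "z = x - \<tau> *\<^sub>R (\<sigma> *\<^sub>R b) + w" "T < \<tau>" "\<tau> < T + s" "w \<bullet> b = 0"
    "\<And>j. j \<in> Basis - {b} \<Longrightarrow> \<bar>w \<bullet> j\<bar> < s" "norm w \<le> real DIM('a) * s"
proof -
  let ?k = "grid_index b s x"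
  define \<tau> where "\<tau> = \<sigma> * (x \<bullet> b - z \<bullet> b)"
  define w where "w = perp_part b (z - x)"
  have zc: "\<forall>j\<in>Basis - {b}. s * real_of_int (?k j) < z \<bullet> j \<and> z \<bullet> j < s * real_of_int (?k j) + s"
    "T < \<tau>" "\<tau> < T + s"
    using z mem_column_cube[OF b \<sigma>] unfolding \<tau>_def by auto
  have wj: "\<bar>w \<bullet> j\<bar> < s" if j: "j \<in> Basis - {b}" for j
  proof -
    have "?k j = \<lfloor>(x \<bullet> j) / s\<rfloor>" using j unfolding grid_index_def by simp
    then have "real_of_int (?k j) \<le> (x \<bullet> j) / s" "(x \<bullet> j) / s < real_of_int (?k j) + 1" by linarith+
    then have "s * real_of_int (?k j) \<le> x \<bullet> j" "x \<bullet> j < s * real_of_int (?k j) + s"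
      using s by (simp_all add: field_simps)
    moreover have "w \<bullet> j = (z - x) \<bullet> j" using j b by (auto simp: w_def perp_part_def inner_diff_left inner_Basis)
    ultimately show ?thesis using bspec[OF zc(1) j] by (simp add: inner_diff_left abs_less_iff)
  qed
  have "w \<bullet> b = 0" using b by (simp add: w_def perp_part_def inner_diff_left)
  moreover have "norm w \<le> real DIM('a) * s"
  proof -
    have "norm w \<le> (\<Sum>j\<in>Basis - {b}. \<bar>(z - x) \<bullet> j\<bar>)" unfolding w_def by (rule norm_perp_part_le[OF b])
    also have "\<dots> = (\<Sum>j\<in>Basis - {b}. \<bar>w \<bullet> j\<bar>)"
      using b by (intro sum.cong) (auto simp: w_def perp_part_def inner_diff_left inner_Basis)
    also have "\<dots> \<le> (\<Sum>j\<in>Basis - {b}. s)" using wj by (intro sum_mono) (simp add: less_imp_le)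
    also have "\<dots> \<le> real DIM('a) * s" using s card_Basis_remove[OF b] by simp
    finally show ?thesis .
  qed
  moreover have "z = x - \<tau> *\<^sub>R (\<sigma> *\<^sub>R b) + w"
  proof -
    have "\<tau> *\<^sub>R (\<sigma> *\<^sub>R b) = (\<sigma> * \<sigma> * (x \<bullet> b - z \<bullet> b)) *\<^sub>R b" by (simp add: \<tau>_def)
    also have "\<dots> = (x \<bullet> b - z \<bullet> b) *\<^sub>R b" using \<sigma> by auto
    finally show ?thesis unfolding w_def perp_part_def by (simp add: inner_diff_left algebra_simps)
  qed
  ultimately show ?thesis using that zc(2,3) wj by blast
qed

lemma sum_column_cubes_le_set_integral:
  fixes b :: "'a::euclidean_space" and \<Phi> :: "'a \<Rightarrow> real"
  assumes b: "b \<in> Basis" and \<sigma>: "\<sigma> = 1 \<or> \<sigma> = -1" and s: "s > 0" and K: "finite K"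
    and xk: "\<And>k. k \<in> K \<Longrightarrow> grid_index b s (xk k) = k"
    and a0: "\<And>k i. k \<in> K \<Longrightarrow> 0 \<le> a k i"
    and a: "\<And>k i z. k \<in> K \<Longrightarrow> i < J \<Longrightarrow> z \<in> column_cube b \<sigma> (xk k) k s (D + real i * s)
              \<Longrightarrow> z \<in> \<Omega> \<and> a k i \<le> \<Phi> z"
    and int: "set_integrable lborel \<Omega> \<Phi>" and nonneg: "\<And>z. z \<in> \<Omega> \<Longrightarrow> 0 \<le> \<Phi> z"
  shows "(\<Sum>k\<in>K. \<Sum>i<J. a k i * s ^ DIM('a)) \<le> (LINT z:\<Omega>|lborel. \<Phi> z)"
proof -
  define C where "C = (\<lambda>(k, i). column_cube b \<sigma> (xk k) k s (D + real i * s))"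
  define w where "w = (\<lambda>(k, i). a k i)"
  have "ennreal (\<Sum>k\<in>K. \<Sum>i<J. a k i * s ^ DIM('a)) = (\<Sum>p\<in>K \<times> {..<J}. ennreal (w p * s ^ DIM('a)))"
    unfolding sum.cartesian_product using a0 s
    by (subst sum_ennreal[symmetric]) (auto simp: w_def intro!: sum.cong)
  also have "\<dots> = (\<Sum>p\<in>K \<times> {..<J}. ennreal (w p) * emeasure lborel (C p))"
    using s by (intro sum.cong) (auto simp: C_def emeasure_column_cube ennreal_mult'')
  also have "\<dots> \<le> ennreal (LINT z:\<Omega>|lborel. \<Phi> z)"
  proof (rule sum_emeasure_le_set_integral[OF _ _ _ _ int nonneg])
    show "finite (K \<times> {..<J})" using K by simp
    show "C p \<in> sets lborel" for p by (simp add: C_def column_cube_def split: prod.split)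
    show "disjoint_family_on C (K \<times> {..<J})"
      unfolding C_def by (rule disjoint_family_on_column_cubes[OF b \<sigma> s xk])
    show "z \<in> \<Omega> \<and> w p \<le> \<Phi> z" if "p \<in> K \<times> {..<J}" "z \<in> C p" for p z
      using that a by (auto simp: C_def w_def)
  qed
  finally show ?thesis
    using set_integral_nonneg[of \<Omega> \<Phi>] nonneg by (simp add: ennreal_le_iff)
qed

section \<open>Boundary charts\<close>

lemma C2_on_has_derivative:
  assumes "C2_on U \<rho>" "x \<in> U"
  shows "(\<rho> has_derivative (\<lambda>v. grad \<rho> x \<bullet> v)) (at x)"
  using assms unfolding C2_on_def by (intro has_derivative_grad) blast

lemma C2_on_continuous_on_grad:
  assumes "C2_on U \<rho>" "open U"
  shows "continuous_on U (grad \<rho>)"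
  using assms unfolding C2_on_def
  by (intro continuous_at_imp_continuous_on) (metis differentiable_imp_continuous_within)

lemma boundary_chart_exists:
  fixes \<rho> :: "'a::euclidean_space \<Rightarrow> real"
  assumes "C2_on U \<rho>" "open U" "x0 \<in> U" "grad \<rho> x0 \<noteq> 0"
  shows "\<exists>b\<in>Basis. \<exists>\<sigma>::real. (\<sigma> = 1 \<or> \<sigma> = -1) \<and> (\<exists>r>0. \<exists>m>0. \<exists>M>0.
           coord_cube x0 r \<subseteq> U \<and> (\<forall>z\<in>coord_cube x0 r. grad \<rho> z \<bullet> (\<sigma> *\<^sub>R b) \<ge> m \<and> norm (grad \<rho> z) \<le> M))"
proof -
  obtain b where b: "b \<in> Basis" "grad \<rho> x0 \<bullet> b \<noteq> 0"
    using assms(4) by (metis euclidean_all_zero_iff)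
  define \<sigma> :: real where "\<sigma> = sgn (grad \<rho> x0 \<bullet> b)"
  have \<sigma>: "\<sigma> = 1 \<or> \<sigma> = -1" using b by (auto simp: \<sigma>_def sgn_real_def)
  define m where "m = \<bar>grad \<rho> x0 \<bullet> b\<bar> / 2"
  have m: "m > 0" using b by (simp add: m_def)
  have ge: "grad \<rho> x0 \<bullet> (\<sigma> *\<^sub>R b) = 2 * m"
    by (simp add: m_def \<sigma>_def sgn_real_def abs_if)
  have c: "continuous (at x0) (grad \<rho>)"
    using C2_on_continuous_on_grad[OF assms(1,2)] assms(2,3) continuous_on_eq_continuous_at by blast
  obtain d1 where d1: "d1 > 0" "\<forall>z. dist z x0 < d1 \<longrightarrow> dist (grad \<rho> z) (grad \<rho> x0) < m"
    using c m unfolding continuous_at_eps_delta by blast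
  obtain d2 where d2: "d2 > 0" "ball x0 d2 \<subseteq> U" using assms(2,3) open_contains_ball by blast
  define d where "d = min d1 d2"
  define r where "r = d / real DIM('a)"
  have r: "r > 0" using d1 d2 by (simp add: r_def d_def)
  have sub: "coord_cube x0 r \<subseteq> ball x0 d"
    using coord_cube_subset_ball[of x0 r] by (simp add: r_def)
  have Mpos: "0 < norm (grad \<rho> x0) + m" using m by (simp add: add_nonneg_pos)
  have "ball x0 d \<subseteq> ball x0 d2" unfolding d_def by (rule subset_ball) simp
  then have BU: "coord_cube x0 r \<subseteq> U" using sub d2(2) by blast
  have P: "\<forall>z\<in>coord_cube x0 r. grad \<rho> z \<bullet> (\<sigma> *\<^sub>R b) \<ge> m \<and> norm (grad \<rho> z) \<le> norm (grad \<rho> x0) + m"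
  proof
    fix z assume z: "z \<in> coord_cube x0 r"
    then have "dist z x0 < d1" using sub by (auto simp: d_def dist_commute)
    then have dz: "norm (grad \<rho> z - grad \<rho> x0) < m" using d1 by (simp add: dist_norm)
    have nsb: "norm (\<sigma> *\<^sub>R b) = 1" using \<sigma> b by auto
    have "\<bar>(grad \<rho> z - grad \<rho> x0) \<bullet> (\<sigma> *\<^sub>R b)\<bar> \<le> norm (grad \<rho> z - grad \<rho> x0)"
      using Cauchy_Schwarz_ineq2[of "grad \<rho> z - grad \<rho> x0" "\<sigma> *\<^sub>R b"] nsb by simp
    then have lower: "m \<le> grad \<rho> z \<bullet> (\<sigma> *\<^sub>R b)" using dz ge by (simp add: inner_diff_left abs_le_iff right_diff_distrib)
    have upper: "norm (grad \<rho> z) \<le> norm (grad \<rho> x0) + m"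
      using dz norm_triangle_ineq2[of "grad \<rho> z" "grad \<rho> x0"] by linarith
    show "grad \<rho> z \<bullet> (\<sigma> *\<^sub>R b) \<ge> m \<and> norm (grad \<rho> z) \<le> norm (grad \<rho> x0) + m" using lower upper by blast
  qed
  show ?thesis using b(1) \<sigma> r m Mpos BU P by blast
qed

text \<open>In the cube of half-side \<open>r\<close> around the boundary point \<open>x0\<close>, the defining function
  increases at rate at least \<open>m\<close> in the direction \<open>\<sigma> b\<close> and is \<open>M\<close>-Lipschitz, so there the
  boundary is a graph over \<open>b\<^sup>\<bottom>\<close> with Lipschitz constant \<open>M / m\<close>, and \<open>\<Omega>\<close> lies on the side
  of \<open>-\<sigma> b\<close>.\<close>

locale boundary_chart =
  fixes \<Omega> :: "'a::euclidean_space set" and \<rho> :: "'a \<Rightarrow> real" and U :: "'a set"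
    and x0 b :: 'a and \<sigma> r m M :: real
  assumes op: "open \<Omega>" and bd: "bounded \<Omega>"
    and C2: "C2_on U \<rho>" and inU: "\<forall>x\<in>U. x \<in> \<Omega> \<longleftrightarrow> \<rho> x < 0"
    and bdry: "\<forall>x\<in>frontier \<Omega>. \<rho> x = 0"
    and b: "b \<in> Basis" and \<sigma>: "\<sigma> = 1 \<or> \<sigma> = -1" and r: "r > 0" and m: "m > 0" and M: "M > 0"
    and BU: "coord_cube x0 r \<subseteq> U" and gm: "\<forall>z\<in>coord_cube x0 r. grad \<rho> z \<bullet> (\<sigma> *\<^sub>R b) \<ge> m"
    and gM: "\<forall>z\<in>coord_cube x0 r. norm (grad \<rho> z) \<le> M"
begin

lemma sign_sq: "\<sigma> * \<sigma> = 1" using \<sigma> by auto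

lemma norm_direction: "norm (\<sigma> *\<^sub>R b) = 1" using \<sigma> b by auto

lemma defining_function_lipschitz:
  assumes "z1 \<in> coord_cube x0 r" "z2 \<in> coord_cube x0 r"
  shows "\<bar>\<rho> z1 - \<rho> z2\<bar> \<le> M * norm (z1 - z2)"
proof -
  have "norm (\<rho> z1 - \<rho> z2) \<le> M * norm (z1 - z2)"
  proof (rule differentiable_bound[OF convex_coord_cube _ _ assms])
    fix z assume z: "z \<in> coord_cube x0 r"
    show "(\<rho> has_derivative (\<lambda>v. grad \<rho> z \<bullet> v)) (at z within coord_cube x0 r)"
      using C2_on_has_derivative[OF C2] BU z has_derivative_at_withinI by blast
    show "onorm (\<lambda>v. grad \<rho> z \<bullet> v) \<le> M"
    proof (rule onorm_le)
      fix v
      have "norm (grad \<rho> z \<bullet> v) \<le> norm (grad \<rho> z) * norm v" by (simp add: Cauchy_Schwarz_ineq2)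
      also have "\<dots> \<le> M * norm v" using gM z by (intro mult_right_mono) auto
      finally show "norm (grad \<rho> z \<bullet> v) \<le> M * norm v" .
    qed
  qed
  then show ?thesis by simp
qed

lemma defining_function_increasing:
  assumes z: "z \<in> coord_cube x0 r" and z': "z + \<tau> *\<^sub>R (\<sigma> *\<^sub>R b) \<in> coord_cube x0 r" and \<tau>: "\<tau> \<ge> 0"
  shows "\<rho> z + m * \<tau> \<le> \<rho> (z + \<tau> *\<^sub>R (\<sigma> *\<^sub>R b))"
proof (cases "\<tau> = 0")
  case True then show ?thesis by simp
next
  case False
  then have tp: "\<tau> > 0" using \<tau> by simp
  let ?e = "\<sigma> *\<^sub>R b"
  have inB: "z + t *\<^sub>R ?e \<in> coord_cube x0 r" if "0 \<le> t" "t \<le> \<tau>" for t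
  proof -
    have "z + t *\<^sub>R ?e = (1 - t/\<tau>) *\<^sub>R z + (t/\<tau>) *\<^sub>R (z + \<tau> *\<^sub>R ?e)"
      using tp by (simp add: algebra_simps)
    moreover have "(1 - t/\<tau>) *\<^sub>R z + (t/\<tau>) *\<^sub>R (z + \<tau> *\<^sub>R ?e) \<in> coord_cube x0 r"
      using that tp by (intro convexD[OF convex_coord_cube z z']) (auto simp: divide_le_eq_1_pos)
    ultimately show ?thesis by simp
  qed
  have D: "DERIV (\<lambda>t. \<rho> (z + t *\<^sub>R ?e)) t :> grad \<rho> (z + t *\<^sub>R ?e) \<bullet> ?e"
    if "0 \<le> t" "t \<le> \<tau>" for t
  proof -
    have d1: "((\<lambda>t. z + t *\<^sub>R ?e) has_derivative (\<lambda>h. h *\<^sub>R ?e)) (at t)"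
      by (auto intro!: derivative_eq_intros)
    have d2: "(\<rho> has_derivative (\<lambda>v. grad \<rho> (z + t *\<^sub>R ?e) \<bullet> v)) (at (z + t *\<^sub>R ?e))"
      using C2_on_has_derivative[OF C2] BU inB[OF that] by blast
    have "((\<lambda>t. \<rho> (z + t *\<^sub>R ?e)) has_derivative (\<lambda>h. grad \<rho> (z + t *\<^sub>R ?e) \<bullet> (h *\<^sub>R ?e))) (at t)"
      using has_derivative_compose[OF d1 d2] by simp
    moreover have "(\<lambda>h. grad \<rho> (z + t *\<^sub>R ?e) \<bullet> (h *\<^sub>R ?e)) = (*) (grad \<rho> (z + t *\<^sub>R ?e) \<bullet> ?e)"
      by (rule ext) (simp add: mult.commute)
    ultimately show ?thesis unfolding has_field_derivative_def by simp
  qed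
  obtain \<xi> where \<xi>: "0 < \<xi>" "\<xi> < \<tau>"
    and eq: "\<rho> (z + \<tau> *\<^sub>R ?e) - \<rho> (z + 0 *\<^sub>R ?e) = (\<tau> - 0) * (grad \<rho> (z + \<xi> *\<^sub>R ?e) \<bullet> ?e)"
    using MVT2[OF tp, of "\<lambda>t. \<rho> (z + t *\<^sub>R ?e)" "\<lambda>t. grad \<rho> (z + t *\<^sub>R ?e) \<bullet> ?e"] D by auto
  have "grad \<rho> (z + \<xi> *\<^sub>R ?e) \<bullet> ?e \<ge> m" using gm inB[of \<xi>] \<xi> by auto
  then have "m * \<tau> \<le> \<tau> * (grad \<rho> (z + \<xi> *\<^sub>R ?e) \<bullet> ?e)" using tp by (simp add: mult.commute)
  then show ?thesis using eq by simp
qed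

lemma boundary_height_lipschitz:
  assumes x: "x \<in> frontier \<Omega>" "x \<in> coord_cube x0 r" and x': "x' \<in> frontier \<Omega>" "x' \<in> coord_cube x0 r"
  shows "m * \<bar>(x - x') \<bullet> b\<bar> \<le> M * norm (perp_part b (x - x'))"
proof -
  define \<Delta> where "\<Delta> = (x - x') \<bullet> b"
  define y where "y = x' + \<Delta> *\<^sub>R b"
  have yB: "y \<in> coord_cube x0 r"
    unfolding mem_coord_cube
  proof
    fix i :: 'a assume i: "i \<in> Basis"
    show "\<bar>(y - x0) \<bullet> i\<bar> < r"
    proof (cases "i = b")
      case True
      then have "(y - x0) \<bullet> i = (x - x0) \<bullet> i" using b
        by (simp add: y_def \<Delta>_def inner_diff_left inner_add_left)
      then show ?thesis using x(2) i unfolding mem_coord_cube by simp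
    next
      case False
      then have "(y - x0) \<bullet> i = (x' - x0) \<bullet> i" using b i
        by (simp add: y_def inner_diff_left inner_add_left inner_Basis)
      then show ?thesis using x'(2) i unfolding mem_coord_cube by simp
    qed
  qed
  have rx: "\<rho> x = 0" "\<rho> x' = 0" using bdry x x' by auto
  have low: "m * \<bar>\<Delta>\<bar> \<le> \<bar>\<rho> y\<bar>"
  proof (cases "\<sigma> * \<Delta> \<ge> 0")
    case True
    have "y = x' + (\<sigma> * \<Delta>) *\<^sub>R (\<sigma> *\<^sub>R b)" using sign_sq by (simp add: y_def algebra_simps)
    then have "\<rho> x' + m * (\<sigma> * \<Delta>) \<le> \<rho> y" using defining_function_increasing[OF x'(2), of "\<sigma> * \<Delta>"] yB True by simp
    moreover have "\<bar>\<Delta>\<bar> = \<sigma> * \<Delta>" using True \<sigma> by auto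
    ultimately show ?thesis using rx by simp
  next
    case False
    have "x' = y + (- \<sigma> * \<Delta>) *\<^sub>R (\<sigma> *\<^sub>R b)" using sign_sq by (simp add: y_def algebra_simps)
    then have "\<rho> y + m * (- \<sigma> * \<Delta>) \<le> \<rho> x'" using defining_function_increasing[OF yB, of "- \<sigma> * \<Delta>"] x'(2) False by simp
    moreover have "\<bar>\<Delta>\<bar> = - \<sigma> * \<Delta>" using False \<sigma> by auto
    ultimately show ?thesis using rx by simp
  qed
  have "\<bar>\<rho> y - \<rho> x\<bar> \<le> M * norm (y - x)" by (rule defining_function_lipschitz[OF yB x(2)])
  moreover have "y - x = - perp_part b (x - x')" by (simp add: y_def perp_part_def \<Delta>_def algebra_simps)
  ultimately have "\<bar>\<rho> y\<bar> \<le> M * norm (perp_part b (x - x'))" using rx by simp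
  with low show ?thesis unfolding \<Delta>_def by linarith
qed

lemma boundary_cell_diameter:
  assumes s: "s > 0" and x: "x \<in> boundary_cell (frontier \<Omega>) b x0 r s k" and x': "x' \<in> boundary_cell (frontier \<Omega>) b x0 r s k"
  shows "norm (x - x') \<le> (1 + M/m) * real DIM('a) * s"
proof -
  have xs: "x \<in> frontier \<Omega>" "x \<in> coord_cube x0 r" "x' \<in> frontier \<Omega>" "x' \<in> coord_cube x0 r"
    and gi: "grid_index b s x = grid_index b s x'"
    using x x' coord_cube_mono[of "r/2" r x0] r unfolding boundary_cell_def by auto
  have ci: "\<bar>(x - x') \<bullet> i\<bar> \<le> s" if i: "i \<in> Basis - {b}" for i
  proof -
    have "\<lfloor>(x \<bullet> i) / s\<rfloor> = \<lfloor>(x' \<bullet> i) / s\<rfloor>"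
      using fun_cong[OF gi, of i] i unfolding grid_index_def by simp
    then have "\<bar>(x \<bullet> i) / s - (x' \<bullet> i) / s\<bar> < 1" by (rule floor_eq_imp_abs_diff_less)
    then have "\<bar>(x \<bullet> i) - (x' \<bullet> i)\<bar> < s" using s
      by (simp add: diff_divide_distrib[symmetric] abs_divide)
    then show ?thesis by (simp add: inner_diff_left)
  qed
  have "norm (perp_part b (x - x')) \<le> (\<Sum>i\<in>Basis - {b}. \<bar>(x - x') \<bullet> i\<bar>)" by (rule norm_perp_part_le[OF b])
  also have "\<dots> \<le> (\<Sum>i\<in>Basis - {b}. s)" by (intro sum_mono ci)
  also have "\<dots> \<le> real DIM('a) * s" using s card_Basis_remove[OF b] by simp
  finally have L: "norm (perp_part b (x - x')) \<le> real DIM('a) * s" .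
  have "m * \<bar>(x - x') \<bullet> b\<bar> \<le> M * norm (perp_part b (x - x'))" by (rule boundary_height_lipschitz[OF xs])
  also have "\<dots> \<le> M * (real DIM('a) * s)" using L M by (intro mult_left_mono) auto
  finally have "\<bar>(x - x') \<bullet> b\<bar> \<le> M / m * (real DIM('a) * s)" using m by (simp add: field_simps)
  then have "norm (x - x') \<le> real DIM('a) * s + M / m * (real DIM('a) * s)"
    using norm_le_perp_part[OF b, of "x - x'"] L by linarith
  then show ?thesis by (simp add: algebra_simps)
qed

lemma grid_index_refine:
  assumes s: "s > 0" and mm: "mm \<ge> (1::nat)" and x: "x \<in> boundary_cell (frontier \<Omega>) b x0 r s k"
  shows "grid_index b (s / real mm) x \<in> (\<Pi>\<^sub>E i\<in>Basis - {b}. {int mm * k i ..< int mm * k i + int mm})"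
proof -
  have gi: "grid_index b s x = k" using x unfolding boundary_cell_def by auto
  show ?thesis
  proof (rule PiE_I)
    fix i assume i: "i \<in> Basis - {b}"
    have ki: "k i = \<lfloor>(x \<bullet> i) / s\<rfloor>" using fun_cong[OF gi, of i] i unfolding grid_index_def by simp
    define a where "a = (x \<bullet> i) / s"
    have eq: "(x \<bullet> i) / (s / real mm) = real mm * a" using s mm by (simp add: a_def field_simps)
    have a1: "real_of_int (k i) \<le> a" "a < real_of_int (k i) + 1" using ki by (auto simp: a_def)
    have "real mm * real_of_int (k i) \<le> real mm * a" using a1 by (intro mult_left_mono) auto
    then have lo: "int mm * k i \<le> \<lfloor>real mm * a\<rfloor>" by (metis le_floor_iff of_int_mult of_int_of_nat_eq)
    have "real mm * a < real mm * (real_of_int (k i) + 1)" using a1 mm by (intro mult_strict_left_mono) auto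
    then have hi: "\<lfloor>real mm * a\<rfloor> < int mm * k i + int mm"
      by (simp add: floor_less_iff algebra_simps)
    show "grid_index b (s / real mm) x i \<in> {int mm * k i ..< int mm * k i + int mm}"
      using i lo hi eq unfolding grid_index_def by simp
  next
    fix i assume ni: "i \<notin> Basis - {b}"
    show "grid_index b (s / real mm) x i = undefined" unfolding grid_index_def restrict_def
      using ni by (simp only: if_False)
  qed
qed

lemma hausdorff_boundary_cell_le:
  assumes dim: "DIM('a) \<ge> 2" and s: "s > 0"
  shows "hausdorff_measure (DIM('a) - 1) (boundary_cell (frontier \<Omega>) b x0 r s k)
     \<le> ennreal (graph_cell_const DIM('a) (M/m) * s ^ (DIM('a) - 1))"
proof -
  define d where "d = DIM('a) - 1"
  define cc where "cc = (1 + M/m) * real DIM('a)"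
  define A where "A = boundary_cell (frontier \<Omega>) b x0 r s k"
  have cc0: "cc > 0" using m M by (simp add: cc_def add_pos_nonneg)
  have bF: "bounded (frontier \<Omega>)"
    using bd by (meson bounded_closure bounded_subset frontier_subset_closure)
  have "hausdorff_approx d \<delta> A \<le> ennreal (unit_ball_vol (real d) * (cc * s / 2) ^ d)" if \<delta>: "\<delta> > 0" for \<delta>
  proof -
    define mm :: nat where "mm = nat \<lceil>cc * s / \<delta>\<rceil> + 1"
    have mm1: "mm \<ge> 1" by (simp add: mm_def)
    have "cc * s / \<delta> \<le> real mm" unfolding mm_def by linarith
    then have fine: "cc * (s / real mm) \<le> \<delta>" using \<delta> mm1 by (simp add: field_simps)
    have sm: "s / real mm > 0" using s mm1 by simp
    have ccs: "0 \<le> cc * (s / real mm)" using cc0 sm by (intro mult_nonneg_nonneg) auto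
    define SUB where "SUB = (\<Pi>\<^sub>E i\<in>Basis - {b}. {int mm * k i ..< int mm * k i + int mm})"
    have "hausdorff_approx d \<delta> A
        \<le> ennreal (real (card SUB) * unit_ball_vol (real d) * (cc * (s / real mm) / 2) ^ d)"
    proof (rule hausdorff_approx_le_finite_cover)
      show "finite SUB" unfolding SUB_def by (intro finite_PiE) auto
      show "A \<subseteq> (\<Union>k'\<in>SUB. boundary_cell (frontier \<Omega>) b x0 r (s / real mm) k')"
        using grid_index_refine[OF s mm1] by (force simp: A_def SUB_def boundary_cell_def)
      show "bounded (boundary_cell (frontier \<Omega>) b x0 r (s / real mm) k')" for k'
        unfolding boundary_cell_def by (rule bounded_subset[OF bF]) auto
      show "diameter (boundary_cell (frontier \<Omega>) b x0 r (s / real mm) k') \<le> cc * (s / real mm)" for k'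
        using boundary_cell_diameter[OF sm] ccs by (intro diameter_le) (auto simp: cc_def)
    qed (use fine ccs dim in \<open>auto simp: d_def\<close>)
    also have "card SUB = mm ^ d"
      unfolding SUB_def using card_Basis_remove[OF b] by (simp add: card_PiE d_def)
    also have "real (mm ^ d) * unit_ball_vol (real d) * (cc * (s / real mm) / 2) ^ d
        = unit_ball_vol (real d) * (cc * s / 2) ^ d"
      using mm1 by (simp add: power_divide power_mult_distrib field_simps)
    finally show ?thesis .
  qed
  then have "hausdorff_measure d A \<le> ennreal (unit_ball_vol (real d) * (cc * s / 2) ^ d)"
    unfolding hausdorff_measure_def by (intro SUP_least) auto
  moreover have "unit_ball_vol (real d) * (cc * s / 2) ^ d = graph_cell_const DIM('a) (M/m) * s ^ d"
    by (simp add: d_def cc_def graph_cell_const_def power_mult_distrib power_divide mult_ac)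
  ultimately show ?thesis by (simp add: A_def d_def)
qed

lemma inner_direction: "j \<in> Basis \<Longrightarrow> (\<sigma> *\<^sub>R b) \<bullet> j = (if j = b then \<sigma> else 0)"
  using b by (auto simp: inner_Basis)

lemma shift_in_coord_cube:
  assumes x: "x \<in> coord_cube x0 (r/2)" and t: "\<bar>t\<bar> < r/2"
  shows "x - t *\<^sub>R (\<sigma> *\<^sub>R b) \<in> coord_cube x0 r"
  unfolding mem_coord_cube
proof
  fix j :: 'a assume j: "j \<in> Basis"
  have xj: "\<bar>(x - x0) \<bullet> j\<bar> < r/2" using x j unfolding mem_coord_cube by blast
  have "(x - t *\<^sub>R (\<sigma> *\<^sub>R b) - x0) \<bullet> j = (x - x0) \<bullet> j - t * (if j = b then \<sigma> else 0)"
    using inner_direction[OF j] by (simp add: inner_diff_left)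
  moreover have "\<bar>t * (if j = b then \<sigma> else 0)\<bar> \<le> \<bar>t\<bar>" using \<sigma> by (auto simp: abs_mult)
  ultimately show "\<bar>(x - t *\<^sub>R (\<sigma> *\<^sub>R b) - x0) \<bullet> j\<bar> < r" using xj t by linarith
qed

lemma inward_segment_in_domain:
  assumes x: "x \<in> frontier \<Omega>" "x \<in> coord_cube x0 (r/2)" and t: "0 < t" "t < r/2"
  shows "x - t *\<^sub>R (\<sigma> *\<^sub>R b) \<in> \<Omega>"
proof -
  let ?y = "x - t *\<^sub>R (\<sigma> *\<^sub>R b)"
  have yB: "?y \<in> coord_cube x0 r" using shift_in_coord_cube[OF x(2)] t by simp
  have xB: "x \<in> coord_cube x0 r" using x(2) coord_cube_mono[of "r/2" r x0] r by auto
  have "\<rho> ?y + m * t \<le> \<rho> (?y + t *\<^sub>R (\<sigma> *\<^sub>R b))" using defining_function_increasing[OF yB, of t] xB t by simp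
  then have "\<rho> ?y < 0" using bdry x(1) m t by (simp add: add_pos_pos) (smt (verit) mult_pos_pos)
  then show ?thesis using inU BU yB by blast
qed

lemma inward_segment_in_closure:
  assumes x: "x \<in> frontier \<Omega>" "x \<in> coord_cube x0 (r/2)" and t: "0 \<le> t" "t < r/2"
  shows "x - t *\<^sub>R (\<sigma> *\<^sub>R b) \<in> closure \<Omega>"
proof (cases "t = 0")
  case True then show ?thesis using x(1) frontier_subset_closure by auto
next
  case False then show ?thesis using inward_segment_in_domain[OF x] t closure_subset by force
qed

lemma inward_segment_mvt:
  assumes psi: "continuous_on (closure \<Omega>) \<psi>"
    and dpsi: "\<And>y. y \<in> \<Omega> \<Longrightarrow> (\<psi> has_derivative (\<lambda>v. G y \<bullet> v)) (at y)"
    and x: "x \<in> frontier \<Omega>" "x \<in> coord_cube x0 (r/2)" and t: "0 \<le> t1" "t1 < t2" "t2 < r/2"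
  shows "\<exists>\<xi>. t1 \<le> \<xi> \<and> \<xi> \<le> t2 \<and> \<bar>\<psi> (x - t1 *\<^sub>R (\<sigma> *\<^sub>R b)) - \<psi> (x - t2 *\<^sub>R (\<sigma> *\<^sub>R b))\<bar>
            \<le> (t2 - t1) * norm (G (x - \<xi> *\<^sub>R (\<sigma> *\<^sub>R b)))"
proof -
  let ?e = "\<sigma> *\<^sub>R b"
  define \<phi> where "\<phi> t = \<psi> (x - t *\<^sub>R ?e)" for t
  have c1: "continuous_on {t1..t2} (\<lambda>t. x - t *\<^sub>R ?e)" by (intro continuous_intros)
  have im: "(\<lambda>t. x - t *\<^sub>R ?e) ` {t1..t2} \<subseteq> closure \<Omega>" using inward_segment_in_closure[OF x] t by auto
  have cont: "continuous_on {t1..t2} \<phi>"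
    unfolding \<phi>_def by (rule continuous_on_compose2[OF psi c1 im])
  have D: "DERIV \<phi> t :> - (G (x - t *\<^sub>R ?e) \<bullet> ?e)" if "0 < t" "t < r/2" for t
  proof -
    have yO: "x - t *\<^sub>R ?e \<in> \<Omega>" using inward_segment_in_domain[OF x that] .
    have d1: "((\<lambda>t. x - t *\<^sub>R ?e) has_derivative (\<lambda>h. - (h *\<^sub>R ?e))) (at t)"
      by (auto intro!: derivative_eq_intros)
    have "(\<phi> has_derivative (\<lambda>h. G (x - t *\<^sub>R ?e) \<bullet> (- (h *\<^sub>R ?e)))) (at t)"
      unfolding \<phi>_def using has_derivative_compose[OF d1 dpsi[OF yO]] by simp
    moreover have "(\<lambda>h. G (x - t *\<^sub>R ?e) \<bullet> (- (h *\<^sub>R ?e))) = (*) (- (G (x - t *\<^sub>R ?e) \<bullet> ?e))"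
      by (rule ext) (simp add: mult.commute)
    ultimately show ?thesis unfolding has_field_derivative_def by simp
  qed
  obtain l z where z: "t1 < z" "z < t2" and Dz: "DERIV \<phi> z :> l" and eq: "\<phi> t2 - \<phi> t1 = (t2 - t1) * l"
    using MVT[OF t(2) cont] D t real_differentiable_def by (metis less_trans order_le_less_trans)
  have "l = - (G (x - z *\<^sub>R ?e) \<bullet> ?e)" using DERIV_unique[OF Dz D] z t by simp
  then have "\<bar>l\<bar> \<le> norm (G (x - z *\<^sub>R ?e))" using Cauchy_Schwarz_ineq2[of "G (x - z *\<^sub>R ?e)" ?e] norm_direction by simp
  moreover have "\<bar>\<phi> t1 - \<phi> t2\<bar> = (t2 - t1) * \<bar>l\<bar>"
    using eq t by (metis abs_minus_commute abs_mult abs_of_pos diff_gt_0_iff_gt)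
  ultimately have "\<bar>\<phi> t1 - \<phi> t2\<bar> \<le> (t2 - t1) * norm (G (x - z *\<^sub>R ?e))"
    using t by (simp add: mult_left_mono)
  then show ?thesis using z unfolding \<phi>_def by (intro exI[of _ z]) auto
qed

lemma inward_segment_increments:
  assumes psi: "continuous_on (closure \<Omega>) \<psi>"
    and dpsi: "\<And>y. y \<in> \<Omega> \<Longrightarrow> (\<psi> has_derivative (\<lambda>v. G y \<bullet> v)) (at y)"
    and x: "x \<in> frontier \<Omega>" "x \<in> coord_cube x0 (r/2)" and s: "s > 0" and depth: "real J * s < r/2"
  obtains \<xi> where "\<And>i. i < J \<Longrightarrow> real i * s \<le> \<xi> i \<and> \<xi> i \<le> real (Suc i) * s"
    "\<And>i. i < J \<Longrightarrow> \<bar>\<psi> (x - (real i * s) *\<^sub>R (\<sigma> *\<^sub>R b)) - \<psi> (x - (real (Suc i) * s) *\<^sub>R (\<sigma> *\<^sub>R b))\<bar>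
                      \<le> s * norm (G (x - \<xi> i *\<^sub>R (\<sigma> *\<^sub>R b)))"
proof -
  have "\<exists>\<xi>. (real i * s \<le> \<xi> \<and> \<xi> \<le> real (Suc i) * s) \<and>
      \<bar>\<psi> (x - (real i * s) *\<^sub>R (\<sigma> *\<^sub>R b)) - \<psi> (x - (real (Suc i) * s) *\<^sub>R (\<sigma> *\<^sub>R b))\<bar>
        \<le> s * norm (G (x - \<xi> *\<^sub>R (\<sigma> *\<^sub>R b)))" if i: "i < J" for i
  proof -
    have "real (Suc i) * s \<le> real J * s" using i s by (intro mult_right_mono) auto
    then have "real (Suc i) * s < r/2" using depth by linarith
    then obtain \<xi> where "real i * s \<le> \<xi>" "\<xi> \<le> real (Suc i) * s"
      "\<bar>\<psi> (x - (real i * s) *\<^sub>R (\<sigma> *\<^sub>R b)) - \<psi> (x - (real (Suc i) * s) *\<^sub>R (\<sigma> *\<^sub>R b))\<bar>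
         \<le> (real (Suc i) * s - real i * s) * norm (G (x - \<xi> *\<^sub>R (\<sigma> *\<^sub>R b)))"
      using inward_segment_mvt[OF psi dpsi x, of "real i * s" "real (Suc i) * s"] s by auto
    then show ?thesis by (intro exI[of _ \<xi>]) (simp add: algebra_simps)
  qed
  then obtain \<xi> where \<xi>: "\<And>i. i < J \<Longrightarrow> (real i * s \<le> \<xi> i \<and> \<xi> i \<le> real (Suc i) * s) \<and>
      \<bar>\<psi> (x - (real i * s) *\<^sub>R (\<sigma> *\<^sub>R b)) - \<psi> (x - (real (Suc i) * s) *\<^sub>R (\<sigma> *\<^sub>R b))\<bar>
        \<le> s * norm (G (x - \<xi> i *\<^sub>R (\<sigma> *\<^sub>R b)))"
    by metis
  show ?thesis by (rule that[of \<xi>]) (use \<xi> in auto)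
qed

lemma column_cube_in_domain:
  assumes s: "s > 0" and x: "x \<in> frontier \<Omega>" "x \<in> coord_cube x0 (r/2)"
    and D: "D = M / m * real DIM('a) * s" and t: "t \<ge> 0" and small: "D + t + s < r/2"
    and z: "z \<in> column_cube b \<sigma> x (grid_index b s x) s (D + t)"
  shows "z \<in> \<Omega>" "\<And>t'. t \<le> t' \<Longrightarrow> t' \<le> t + s \<Longrightarrow>
           norm (z - (x - t' *\<^sub>R (\<sigma> *\<^sub>R b))) \<le> D + s + real DIM('a) * s"
proof -
  let ?e = "\<sigma> *\<^sub>R b"
  obtain \<tau> w where zrep: "z = x - \<tau> *\<^sub>R ?e + w" and \<tau>: "D + t < \<tau>" "\<tau> < D + t + s"
    and wb: "w \<bullet> b = 0" and wj: "\<And>j. j \<in> Basis - {b} \<Longrightarrow> \<bar>w \<bullet> j\<bar> < s"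
    and nw: "norm w \<le> real DIM('a) * s"
    by (rule column_cube_decomposition[OF b \<sigma> s z]) blast
  have D0: "D \<ge> 0" using D m M s by simp
  have tau_pos: "\<tau> > 0" using \<tau> D0 t by linarith
  have yB: "x - \<tau> *\<^sub>R ?e \<in> coord_cube x0 r"
    using shift_in_coord_cube[OF x(2), of \<tau>] \<tau> tau_pos small by simp
  have xB: "x \<in> coord_cube x0 r" using x(2) coord_cube_mono[of "r/2" r x0] r by auto
  have zB: "z \<in> coord_cube x0 r"
    unfolding mem_coord_cube
  proof
    fix j :: 'a assume j: "j \<in> Basis"
    show "\<bar>(z - x0) \<bullet> j\<bar> < r"
    proof (cases "j = b")
      case True
      then have "(z - x0) \<bullet> j = (x - \<tau> *\<^sub>R ?e - x0) \<bullet> j"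
        using wb by (simp add: zrep inner_diff_left inner_add_left)
      then show ?thesis using yB j unfolding mem_coord_cube by simp
    next
      case False
      have "(z - x0) \<bullet> j = (x - x0) \<bullet> j + w \<bullet> j"
        using inner_direction[OF j] False by (simp add: zrep inner_diff_left inner_add_left)
      moreover have "\<bar>(x - x0) \<bullet> j\<bar> < r/2" using x(2) j unfolding mem_coord_cube by blast
      moreover have "\<bar>w \<bullet> j\<bar> < s" using wj j False by blast
      moreover have "s < r/2" using small D0 t by linarith
      ultimately show ?thesis by linarith
    qed
  qed
  have "\<rho> (x - \<tau> *\<^sub>R ?e) + m * \<tau> \<le> \<rho> (x - \<tau> *\<^sub>R ?e + \<tau> *\<^sub>R ?e)"
    using defining_function_increasing[OF yB, of \<tau>] xB tau_pos by simp
  then have below: "\<rho> (x - \<tau> *\<^sub>R ?e) \<le> - (m * \<tau>)" using bdry x(1) by simp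
  have "\<bar>\<rho> z - \<rho> (x - \<tau> *\<^sub>R ?e)\<bar> \<le> M * norm (z - (x - \<tau> *\<^sub>R ?e))"
    by (rule defining_function_lipschitz[OF zB yB])
  also have "\<dots> \<le> M * (real DIM('a) * s)" using nw M zrep by (simp add: mult_left_mono)
  also have "\<dots> = m * D" using D m by simp
  finally have "\<rho> z \<le> - (m * \<tau>) + m * D" using below by linarith
  moreover have "m * D < m * \<tau>" using \<tau> t m by (intro mult_strict_left_mono) auto
  ultimately have "\<rho> z < 0" by linarith
  then show "z \<in> \<Omega>" using inU BU zB by blast
  fix t' assume t': "t \<le> t'" "t' \<le> t + s"
  have "z - (x - t' *\<^sub>R ?e) = w + (t' - \<tau>) *\<^sub>R ?e" using zrep by (simp add: algebra_simps)
  moreover have "norm ((t' - \<tau>) *\<^sub>R ?e) = \<bar>t' - \<tau>\<bar>" using norm_direction by (simp only: norm_scaleR) simp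
  ultimately have "norm (z - (x - t' *\<^sub>R ?e)) \<le> norm w + \<bar>t' - \<tau>\<bar>"
    using norm_triangle_ineq[of w "(t' - \<tau>) *\<^sub>R ?e"] by simp
  moreover have "\<bar>t' - \<tau>\<bar> \<le> D + s" using t' \<tau> D0 by (simp add: abs_le_iff)
  ultimately show "norm (z - (x - t' *\<^sub>R ?e)) \<le> D + s + real DIM('a) * s" using nw by linarith
qed

lemma nn_integral_boundary_piece_le:
  assumes dim: "DIM('a) \<ge> 2" and s: "s > 0"
    and c: "\<And>x. x \<in> frontier \<Omega> \<inter> coord_cube x0 (r/2) \<Longrightarrow> g x \<le> c (grid_index b s x)"
    and c0: "\<And>k. 0 \<le> c k"
  shows "(\<integral>\<^sup>+x. ennreal (g x) * indicator (frontier \<Omega> \<inter> coord_cube x0 (r/2)) x \<partial>surface_measure \<Omega>)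
     \<le> ennreal (graph_cell_const DIM('a) (M/m) * s ^ (DIM('a) - 1)
          * (\<Sum>k\<in>grid_index b s ` (frontier \<Omega> \<inter> coord_cube x0 (r/2)). c k))"
proof -
  define I where "I = frontier \<Omega> \<inter> coord_cube x0 (r/2)"
  define K where "K = grid_index b s ` I"
  define cell where "cell = boundary_cell (frontier \<Omega>) b x0 r s"
  define \<kappa> where "\<kappa> = graph_cell_const DIM('a) (M/m) * s ^ (DIM('a) - 1)"
  have \<kappa>: "0 \<le> \<kappa>" using m M s by (simp add: \<kappa>_def graph_cell_const_nonneg)
  have "bounded I"
    unfolding I_def using bd by (meson bounded_closure bounded_subset frontier_subset_closure inf_le1)
  then have K: "finite K" unfolding K_def using s by (rule finite_grid_index_image)
  have cell_sets: "cell k \<in> sets (surface_measure \<Omega>)" if "k \<in> K" for k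
    using that unfolding cell_def K_def grid_index_def by (auto intro: sets_boundary_cell)
  have "ennreal (g x) * indicator I x \<le> (\<Sum>k\<in>K. ennreal (c k) * indicator (cell k) x)" for x
  proof (cases "x \<in> I")
    case True
    then have "ennreal (g x) * indicator I x \<le> ennreal (c (grid_index b s x)) * indicator (cell (grid_index b s x)) x"
      using c[of x] by (simp add: I_def cell_def boundary_cell_def ennreal_leI)
    also have "\<dots> \<le> (\<Sum>k\<in>K. ennreal (c k) * indicator (cell k) x)"
      using True K by (intro member_le_sum) (auto simp: K_def)
    finally show ?thesis .
  qed simp
  then have "(\<integral>\<^sup>+x. ennreal (g x) * indicator I x \<partial>surface_measure \<Omega>)
      \<le> (\<integral>\<^sup>+x. (\<Sum>k\<in>K. ennreal (c k) * indicator (cell k) x) \<partial>surface_measure \<Omega>)"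
    by (intro nn_integral_mono)
  also have "\<dots> = (\<Sum>k\<in>K. ennreal (c k) * emeasure (surface_measure \<Omega>) (cell k))"
    using cell_sets by (subst nn_integral_sum) (auto intro!: sum.cong nn_integral_cmult_indicator)
  also have "\<dots> \<le> (\<Sum>k\<in>K. ennreal (c k) * ennreal \<kappa>)"
  proof (intro sum_mono mult_left_mono)
    show "emeasure (surface_measure \<Omega>) (cell k) \<le> ennreal \<kappa>" for k
      using emeasure_surface_measure_le_hausdorff hausdorff_boundary_cell_le[OF dim s]
      unfolding cell_def \<kappa>_def by (rule order.trans)
  qed simp
  also have "\<dots> = ennreal (\<kappa> * (\<Sum>k\<in>K. c k))"
    using c0 \<kappa> by (simp add: ennreal_mult'[symmetric] sum_ennreal sum_distrib_left mult.commute)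
  finally show ?thesis by (simp add: I_def K_def \<kappa>_def)
qed

lemma column_estimate:
  fixes \<psi> :: "'a \<Rightarrow> real"
  assumes psi: "continuous_on (closure \<Omega>) \<psi>"
    and dpsi: "\<And>y. y \<in> \<Omega> \<Longrightarrow> (\<psi> has_derivative (\<lambda>v. G y \<bullet> v)) (at y)"
    and close_psi: "\<And>y y'. y \<in> closure \<Omega> \<Longrightarrow> y' \<in> closure \<Omega> \<Longrightarrow> dist y' y < \<delta>
                      \<Longrightarrow> (\<psi> y')\<^sup>2 \<le> (\<psi> y)\<^sup>2 + \<eta>"
    and close_G: "\<And>y y'. y \<in> closure \<Omega> \<Longrightarrow> y' \<in> closure \<Omega> \<Longrightarrow> dist y' y < \<delta>
                      \<Longrightarrow> (norm (G y'))\<^sup>2 \<le> (norm (G y))\<^sup>2 + \<eta>"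
    and x: "x \<in> frontier \<Omega>" "x \<in> coord_cube x0 (r/2)"
    and s: "s > 0" and J: "J \<ge> 1" and h: "h = real J * s"
    and D: "D = M / m * real DIM('a) * s" and deep: "D + h < r/2"
    and fine: "D + s + real DIM('a) * s < \<delta>" and \<eta>: "\<eta> > 0"
  obtains a where "\<And>i. 0 \<le> a i" and "(\<psi> x)\<^sup>2 + \<eta> \<le> (\<Sum>i<J. s * a i)"
    and "\<And>i z. i < J \<Longrightarrow> z \<in> column_cube b \<sigma> x (grid_index b s x) s (D + real i * s) \<Longrightarrow>
           z \<in> \<Omega> \<and> a i \<le> (h/2) * (norm (G z))\<^sup>2 + (3/h) * (\<psi> z)\<^sup>2 + \<eta> * (h/2 + 4/h)"
proof -
  let ?e = "\<sigma> *\<^sub>R b"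
  define p where "p i = x - (real i * s) *\<^sub>R ?e" for i
  have D0: "D \<ge> 0" using D m M s by simp
  have hpos: "h > 0" using h J s by simp
  have below_h: "real i * s \<le> h" if "i \<le> J" for i
    using that s h by (simp add: mult_right_mono)
  have depth: "real i * s < r/2" if "i \<le> J" for i
    using below_h[OF that] deep D0 by linarith
  have p_cl: "p i \<in> closure \<Omega>" if "i \<le> J" for i
    unfolding p_def using inward_segment_in_closure[OF x] depth[OF that] s by simp
  obtain \<xi> where \<xi>: "\<And>i. i < J \<Longrightarrow> real i * s \<le> \<xi> i \<and> \<xi> i \<le> real (Suc i) * s"
    and increment: "\<And>i. i < J \<Longrightarrow> \<bar>\<psi> (p i) - \<psi> (p (Suc i))\<bar> \<le> s * norm (G (x - \<xi> i *\<^sub>R ?e))"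
    using inward_segment_increments[OF psi dpsi x s depth[OF order_refl]] unfolding p_def by blast
  define g where "g i = norm (G (x - \<xi> i *\<^sub>R ?e))" for i
  define a where "a i = (h/2) * (g i)\<^sup>2 + (1/h) * (\<psi> (p i))\<^sup>2 + (2/h) * (\<psi> (p (Suc i)))\<^sup>2 + \<eta> / h" for i
  have a0: "0 \<le> a i" for i using hpos \<eta> by (simp add: a_def)
  have "(\<psi> (p 0))\<^sup>2 \<le> (\<Sum>i<J. s * ((h/2) * (g i)\<^sup>2 + (1/h) * (\<psi> (p i))\<^sup>2 + (2/h) * (\<psi> (p (Suc i)))\<^sup>2))"
    by (rule discrete_trace_inequality[OF J s h]) (use increment in \<open>auto simp: g_def\<close>)
  moreover have "(\<Sum>i<J. s * a i)
      = (\<Sum>i<J. s * ((h/2) * (g i)\<^sup>2 + (1/h) * (\<psi> (p i))\<^sup>2 + (2/h) * (\<psi> (p (Suc i)))\<^sup>2)) + \<eta>"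
    using hpos J s by (simp add: a_def sum.distrib distrib_left h)
  ultimately have trace: "(\<psi> x)\<^sup>2 + \<eta> \<le> (\<Sum>i<J. s * a i)" by (simp add: p_def)
  have "z \<in> \<Omega> \<and> a i \<le> (h/2) * (norm (G z))\<^sup>2 + (3/h) * (\<psi> z)\<^sup>2 + \<eta> * (h/2 + 4/h)"
    if i: "i < J" and z: "z \<in> column_cube b \<sigma> x (grid_index b s x) s (D + real i * s)" for i z
  proof -
    have "D + real i * s + s < r/2"
      using below_h[of "Suc i"] i deep by (simp add: algebra_simps)
    note cube = column_cube_in_domain[OF s x D _ this z]
    have z_cl: "z \<in> closure \<Omega>" using cube(1) s closure_subset by auto
    have near: "dist y z < \<delta>" if "norm (z - y) \<le> D + s + real DIM('a) * s" for y
      using that fine by (simp add: dist_norm norm_minus_commute)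
    have \<xi>_cl: "x - \<xi> i *\<^sub>R ?e \<in> closure \<Omega>"
    proof (rule inward_segment_in_closure[OF x])
      have "0 \<le> real i * s" using s by simp
      then show "0 \<le> \<xi> i" using \<xi>[OF i] by linarith
      show "\<xi> i < r/2" using \<xi>[OF i] depth[of "Suc i"] i by linarith
    qed
    have "norm (z - p j) \<le> D + s + real DIM('a) * s" if "j = i \<or> j = Suc i" for j
      using that cube(2)[of "real j * s"] s unfolding p_def by (auto simp: algebra_simps)
    then have "(\<psi> (p j))\<^sup>2 \<le> (\<psi> z)\<^sup>2 + \<eta>" if "j = i \<or> j = Suc i" for j
      using that close_psi[OF z_cl p_cl[of j] near] i by auto
    then have "(\<psi> (p i))\<^sup>2 \<le> (\<psi> z)\<^sup>2 + \<eta>" "(\<psi> (p (Suc i)))\<^sup>2 \<le> (\<psi> z)\<^sup>2 + \<eta>"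
      by auto
    moreover have "(g i)\<^sup>2 \<le> (norm (G z))\<^sup>2 + \<eta>"
      using close_G[OF z_cl \<xi>_cl near] \<xi>[OF i] cube(2)[of "\<xi> i"] by (simp add: g_def algebra_simps)
    ultimately have "a i \<le> (h/2) * ((norm (G z))\<^sup>2 + \<eta>) + (1/h) * ((\<psi> z)\<^sup>2 + \<eta>) + (2/h) * ((\<psi> z)\<^sup>2 + \<eta>) + \<eta> / h"
      unfolding a_def using hpos by (intro add_mono mult_left_mono) auto
    also have "\<dots> = (h/2) * (norm (G z))\<^sup>2 + (3/h) * (\<psi> z)\<^sup>2 + \<eta> * (h/2 + 4/h)"
      using hpos by (simp add: field_simps)
    finally show ?thesis using cube(1) s by simp
  qed
  with a0 trace show ?thesis using that by blast
qed

lemma column_estimates: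
  fixes \<psi> :: "'a \<Rightarrow> real"
  assumes psi: "continuous_on (closure \<Omega>) \<psi>"
    and dpsi: "\<And>y. y \<in> \<Omega> \<Longrightarrow> (\<psi> has_derivative (\<lambda>v. G y \<bullet> v)) (at y)"
    and close_psi: "\<And>y y'. y \<in> closure \<Omega> \<Longrightarrow> y' \<in> closure \<Omega> \<Longrightarrow> dist y' y < \<delta>
                      \<Longrightarrow> (\<psi> y')\<^sup>2 \<le> (\<psi> y)\<^sup>2 + \<eta>"
    and close_G: "\<And>y y'. y \<in> closure \<Omega> \<Longrightarrow> y' \<in> closure \<Omega> \<Longrightarrow> dist y' y < \<delta>
                      \<Longrightarrow> (norm (G y'))\<^sup>2 \<le> (norm (G y))\<^sup>2 + \<eta>"
    and K: "K \<subseteq> grid_index b s ` (frontier \<Omega> \<inter> coord_cube x0 (r/2))"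
    and s: "s > 0" and J: "J \<ge> 1" and h: "h = real J * s"
    and D: "D = M / m * real DIM('a) * s" and deep: "D + h < r/2"
    and fine: "D + s + real DIM('a) * s < \<delta>" and \<eta>: "\<eta> > 0"
  obtains xk a where "\<And>k. k \<in> K \<Longrightarrow> xk k \<in> frontier \<Omega> \<inter> coord_cube x0 (r/2) \<and> grid_index b s (xk k) = k"
    and "\<And>k i. k \<in> K \<Longrightarrow> 0 \<le> a k i" and "\<And>k. k \<in> K \<Longrightarrow> (\<psi> (xk k))\<^sup>2 + \<eta> \<le> (\<Sum>i<J. s * a k i)"
    and "\<And>k i z. k \<in> K \<Longrightarrow> i < J \<Longrightarrow> z \<in> column_cube b \<sigma> (xk k) k s (D + real i * s) \<Longrightarrow>
           z \<in> \<Omega> \<and> a k i \<le> (h/2) * (norm (G z))\<^sup>2 + (3/h) * (\<psi> z)\<^sup>2 + \<eta> * (h/2 + 4/h)"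
proof -
  define \<Phi> where "\<Phi> z = (h/2) * (norm (G z))\<^sup>2 + (3/h) * (\<psi> z)\<^sup>2 + \<eta> * (h/2 + 4/h)" for z
  have "\<exists>x. (x \<in> frontier \<Omega> \<inter> coord_cube x0 (r/2) \<and> grid_index b s x = k) \<and> (\<exists>a. (\<forall>i. 0 \<le> a i) \<and>
      (\<psi> x)\<^sup>2 + \<eta> \<le> (\<Sum>i<J. s * a i) \<and>
      (\<forall>i z. i < J \<longrightarrow> z \<in> column_cube b \<sigma> x k s (D + real i * s) \<longrightarrow> z \<in> \<Omega> \<and> a i \<le> \<Phi> z))"
    if k: "k \<in> K" for k
  proof -
    obtain x where x: "x \<in> frontier \<Omega>" "x \<in> coord_cube x0 (r/2)" "grid_index b s x = k"
      using k K by auto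
    obtain a where "\<And>i. 0 \<le> a i" "(\<psi> x)\<^sup>2 + \<eta> \<le> (\<Sum>i<J. s * a i)"
      "\<And>i z. i < J \<Longrightarrow> z \<in> column_cube b \<sigma> x (grid_index b s x) s (D + real i * s) \<Longrightarrow> z \<in> \<Omega> \<and> a i \<le> \<Phi> z"
      using column_estimate[OF psi dpsi close_psi close_G x(1,2) s J h D deep fine \<eta>]
      unfolding \<Phi>_def by blast
    with x show ?thesis by blast
  qed
  then obtain xk where xk: "\<And>k. k \<in> K \<Longrightarrow> (xk k \<in> frontier \<Omega> \<inter> coord_cube x0 (r/2) \<and> grid_index b s (xk k) = k)
      \<and> (\<exists>a. (\<forall>i. 0 \<le> a i) \<and> (\<psi> (xk k))\<^sup>2 + \<eta> \<le> (\<Sum>i<J. s * a i)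
      \<and> (\<forall>i z. i < J \<longrightarrow> z \<in> column_cube b \<sigma> (xk k) k s (D + real i * s) \<longrightarrow> z \<in> \<Omega> \<and> a i \<le> \<Phi> z))"
    by metis
  from this obtain a where a: "\<And>k. k \<in> K \<Longrightarrow> (\<forall>i. 0 \<le> a k i) \<and> (\<psi> (xk k))\<^sup>2 + \<eta> \<le> (\<Sum>i<J. s * a k i)
      \<and> (\<forall>i z. i < J \<longrightarrow> z \<in> column_cube b \<sigma> (xk k) k s (D + real i * s) \<longrightarrow> z \<in> \<Omega> \<and> a k i \<le> \<Phi> z)"
    by metis
  show ?thesis by (rule that[of xk a]) (use xk a in \<open>auto simp: \<Phi>_def\<close>)
qed

lemma local_trace_estimate_grid:
  fixes \<psi> :: "'a \<Rightarrow> real"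
  assumes dim: "DIM('a) \<ge> 2"
    and psi: "continuous_on (closure \<Omega>) \<psi>" and Gc: "continuous_on (closure \<Omega>) G"
    and dpsi: "\<And>y. y \<in> \<Omega> \<Longrightarrow> (\<psi> has_derivative (\<lambda>v. G y \<bullet> v)) (at y)"
    and close_psi: "\<And>y y'. y \<in> closure \<Omega> \<Longrightarrow> y' \<in> closure \<Omega> \<Longrightarrow> dist y' y < \<delta>
                      \<Longrightarrow> (\<psi> y')\<^sup>2 \<le> (\<psi> y)\<^sup>2 + \<eta>"
    and close_G: "\<And>y y'. y \<in> closure \<Omega> \<Longrightarrow> y' \<in> closure \<Omega> \<Longrightarrow> dist y' y < \<delta>
                      \<Longrightarrow> (norm (G y'))\<^sup>2 \<le> (norm (G y))\<^sup>2 + \<eta>"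
    and s: "s > 0" and J: "J \<ge> 1" and h: "h = real J * s"
    and deep: "M / m * real DIM('a) * s + h < r/2"
    and fine: "M / m * real DIM('a) * s + s + real DIM('a) * s < \<delta>" and \<eta>: "\<eta> > 0"
  shows "(\<integral>\<^sup>+x. ennreal ((\<psi> x)\<^sup>2) * indicator (frontier \<Omega> \<inter> coord_cube x0 (r/2)) x \<partial>surface_measure \<Omega>)
         \<le> ennreal (graph_cell_const DIM('a) (M/m)
              * (LINT z:\<Omega>|lborel. (h/2) * (norm (G z))\<^sup>2 + (3/h) * (\<psi> z)\<^sup>2 + \<eta> * (h/2 + 4/h)))"
proof -
  define n where "n = DIM('a)"
  define I where "I = frontier \<Omega> \<inter> coord_cube x0 (r/2)"
  define K where "K = grid_index b s ` I"
  define \<kappa> where "\<kappa> = graph_cell_const n (M/m)"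
  define \<Phi> where "\<Phi> z = (h/2) * (norm (G z))\<^sup>2 + (3/h) * (\<psi> z)\<^sup>2 + \<eta> * (h/2 + 4/h)" for z
  have \<kappa>: "0 \<le> \<kappa>" using m M by (simp add: \<kappa>_def graph_cell_const_nonneg)
  have "bounded I"
    unfolding I_def using bd by (meson bounded_closure bounded_subset frontier_subset_closure inf_le1)
  then have K: "finite K" unfolding K_def using s by (rule finite_grid_index_image)
  obtain xk a where xk: "\<And>k. k \<in> K \<Longrightarrow> xk k \<in> I \<and> grid_index b s (xk k) = k"
    and a0: "\<And>k i. k \<in> K \<Longrightarrow> 0 \<le> a k i"
    and a_trace: "\<And>k. k \<in> K \<Longrightarrow> (\<psi> (xk k))\<^sup>2 + \<eta> \<le> (\<Sum>i<J. s * a k i)"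
    and a_cube: "\<And>k i z. k \<in> K \<Longrightarrow> i < J \<Longrightarrow> z \<in> column_cube b \<sigma> (xk k) k s (M / m * real n * s + real i * s)
                   \<Longrightarrow> z \<in> \<Omega> \<and> a k i \<le> \<Phi> z"
    using column_estimates[OF psi dpsi close_psi close_G _ s J h refl deep fine \<eta>, of K]
    unfolding K_def I_def \<Phi>_def n_def by blast
  have "(\<psi> x)\<^sup>2 \<le> (\<psi> (xk (grid_index b s x)))\<^sup>2 + \<eta>" if x: "x \<in> I" for x
  proof -
    define k where "k = grid_index b s x"
    have k: "k \<in> K" using x by (simp add: K_def k_def)
    have "x \<in> boundary_cell (frontier \<Omega>) b x0 r s k" "xk k \<in> boundary_cell (frontier \<Omega>) b x0 r s k"
      using x xk[OF k] by (auto simp: boundary_cell_def I_def k_def)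
    then have "norm (x - xk k) \<le> (1 + M/m) * real DIM('a) * s" by (rule boundary_cell_diameter[OF s])
    also have "\<dots> < \<delta>" using fine s by (simp add: algebra_simps)
    finally have "dist x (xk k) < \<delta>" by (simp add: dist_norm)
    moreover have "xk k \<in> closure \<Omega>" "x \<in> closure \<Omega>"
      using xk[OF k] x frontier_subset_closure by (auto simp: I_def)
    ultimately show ?thesis using close_psi by (simp add: k_def)
  qed
  then have "(\<integral>\<^sup>+x. ennreal ((\<psi> x)\<^sup>2) * indicator I x \<partial>surface_measure \<Omega>)
      \<le> ennreal (\<kappa> * s ^ (n - 1) * (\<Sum>k\<in>K. (\<psi> (xk k))\<^sup>2 + \<eta>))"
    unfolding I_def K_def \<kappa>_def n_def
    by (intro nn_integral_boundary_piece_le[OF dim s]) (use \<eta> in \<open>auto simp: I_def\<close>)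
  also have "\<dots> \<le> ennreal (\<kappa> * (\<Sum>k\<in>K. \<Sum>i<J. a k i * s ^ n))"
  proof -
    have "s ^ n = s ^ (n - 1) * s" using dim by (simp add: n_def power_eq_if)
    then have "(\<Sum>k\<in>K. \<Sum>i<J. a k i * s ^ n) = s ^ (n - 1) * (\<Sum>k\<in>K. \<Sum>i<J. s * a k i)"
      by (simp add: sum_distrib_left mult_ac)
    then have "s ^ (n - 1) * (\<Sum>k\<in>K. (\<psi> (xk k))\<^sup>2 + \<eta>) \<le> (\<Sum>k\<in>K. \<Sum>i<J. a k i * s ^ n)"
      using a_trace s by (simp add: mult_left_mono sum_mono)
    then show ?thesis using \<kappa> by (simp add: mult.assoc mult_left_mono ennreal_leI)
  qed
  also have "\<dots> \<le> ennreal (\<kappa> * (LINT z:\<Omega>|lborel. \<Phi> z))"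
  proof (intro ennreal_leI mult_left_mono[OF _ \<kappa>])
    show "(\<Sum>k\<in>K. \<Sum>i<J. a k i * s ^ n) \<le> (LINT z:\<Omega>|lborel. \<Phi> z)"
      unfolding n_def
    proof (rule sum_column_cubes_le_set_integral[OF b \<sigma> s K _ a0 a_cube[unfolded n_def]])
      show "set_integrable lborel \<Omega> \<Phi>"
        unfolding \<Phi>_def by (rule set_integrable_continuous_on_closure[OF op bd]) (intro continuous_intros psi Gc)
      show "0 \<le> \<Phi> z" for z using h s J \<eta> by (simp add: \<Phi>_def)
    qed (use xk in auto)
  qed
  finally show ?thesis by (simp add: I_def \<kappa>_def \<Phi>_def n_def)
qed

lemma local_trace_estimate:
  fixes \<psi> :: "'a \<Rightarrow> real"
  assumes dim: "DIM('a) \<ge> 2"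
    and psi: "continuous_on (closure \<Omega>) \<psi>" and Gc: "continuous_on (closure \<Omega>) G"
    and dpsi: "\<And>y. y \<in> \<Omega> \<Longrightarrow> (\<psi> has_derivative (\<lambda>v. G y \<bullet> v)) (at y)"
    and h: "0 < h" "h \<le> r/4" and \<eta>: "\<eta> > 0"
  shows "(\<integral>\<^sup>+x. ennreal ((\<psi> x)\<^sup>2) * indicator (frontier \<Omega> \<inter> coord_cube x0 (r/2)) x \<partial>surface_measure \<Omega>)
         \<le> ennreal (graph_cell_const DIM('a) (M/m)
              * (LINT z:\<Omega>|lborel. (h/2) * (norm (G z))\<^sup>2 + (3/h) * (\<psi> z)\<^sup>2 + \<eta> * (h/2 + 4/h)))"
proof -
  have cl: "compact (closure \<Omega>)" using bd by (simp add: compact_closure)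
  have "continuous_on (closure \<Omega>) (\<lambda>y. (\<psi> y)\<^sup>2)" by (intro continuous_intros psi)
  then obtain \<delta>1 where \<delta>1: "\<delta>1 > 0"
    and close_psi: "\<forall>y\<in>closure \<Omega>. \<forall>y'\<in>closure \<Omega>. dist y' y < \<delta>1 \<longrightarrow> (\<psi> y')\<^sup>2 \<le> (\<psi> y)\<^sup>2 + \<eta>"
    using continuous_on_compact_uniformly_close[OF cl _ \<eta>] by blast
  have "continuous_on (closure \<Omega>) (\<lambda>y. (norm (G y))\<^sup>2)" by (intro continuous_intros Gc)
  then obtain \<delta>2 where \<delta>2: "\<delta>2 > 0"
    and close_G: "\<forall>y\<in>closure \<Omega>. \<forall>y'\<in>closure \<Omega>. dist y' y < \<delta>2 \<longrightarrow> (norm (G y'))\<^sup>2 \<le> (norm (G y))\<^sup>2 + \<eta>"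
    using continuous_on_compact_uniformly_close[OF cl _ \<eta>] by blast
  define \<delta> where "\<delta> = min \<delta>1 \<delta>2"
  define c where "c = M / m * real DIM('a) + 1 + real DIM('a)"
  have "0 < min \<delta> (r/4)" using \<delta>1 \<delta>2 r by (simp add: \<delta>_def)
  then obtain J :: nat where J: "J \<ge> 1" and cs: "c * (h / real J) < min \<delta> (r/4)"
    using exists_grid_step[OF h(1)] by blast
  define s where "s = h / real J"
  have s: "s > 0" and hJ: "h = real J * s" using h J by (simp_all add: s_def)
  have "c * s < \<delta>" "c * s < r/4" using cs by (simp_all add: s_def)
  moreover have "M / m * real DIM('a) * s + s + real DIM('a) * s = c * s" by (simp add: c_def algebra_simps)
  moreover have "0 \<le> s + real DIM('a) * s" using s by simp
  ultimately have deep: "M / m * real DIM('a) * s + h < r/2"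
    and fine: "M / m * real DIM('a) * s + s + real DIM('a) * s < \<delta>"
    using h(2) by auto
  show ?thesis
  proof (rule local_trace_estimate_grid[OF dim psi Gc dpsi _ _ s J hJ deep fine \<eta>])
    show "(\<psi> y')\<^sup>2 \<le> (\<psi> y)\<^sup>2 + \<eta>" "(norm (G y'))\<^sup>2 \<le> (norm (G y))\<^sup>2 + \<eta>"
      if "y \<in> closure \<Omega>" "y' \<in> closure \<Omega>" "dist y' y < \<delta>" for y y'
      using close_psi close_G that by (auto simp: \<delta>_def)
  qed
qed

lemma local_trace_inequality:
  fixes \<psi> :: "'a \<Rightarrow> real"
  assumes dim: "DIM('a) \<ge> 2"
    and psi: "continuous_on (closure \<Omega>) \<psi>" and Gc: "continuous_on (closure \<Omega>) G"
    and dpsi: "\<And>y. y \<in> \<Omega> \<Longrightarrow> (\<psi> has_derivative (\<lambda>v. G y \<bullet> v)) (at y)"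
    and h: "0 < h" "h \<le> r/4"
  shows "(\<integral>\<^sup>+x. ennreal ((\<psi> x)\<^sup>2) * indicator (frontier \<Omega> \<inter> coord_cube x0 (r/2)) x \<partial>surface_measure \<Omega>)
         \<le> ennreal (graph_cell_const DIM('a) (M/m)
              * ((h/2) * (LINT z:\<Omega>|lborel. (norm (G z))\<^sup>2) + (3/h) * (LINT z:\<Omega>|lborel. (\<psi> z)\<^sup>2)))"
proof (rule ennreal_le_epsilon)
  fix e :: real assume e: "0 < e"
  define \<kappa> where "\<kappa> = graph_cell_const DIM('a) (M/m)"
  define E where "E = (LINT z:\<Omega>|lborel. (norm (G z))\<^sup>2)"
  define N where "N = (LINT z:\<Omega>|lborel. (\<psi> z)\<^sup>2)"
  define V where "V = measure lborel \<Omega>"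
  define W where "W = \<kappa> * (h/2 + 4/h) * V"
  define \<eta> where "\<eta> = e / (W + 1)"
  have \<kappa>: "0 \<le> \<kappa>" using m M by (simp add: \<kappa>_def graph_cell_const_nonneg)
  have W: "0 \<le> W" using \<kappa> h by (simp add: W_def V_def)
  have \<eta>: "\<eta> > 0" using e W by (simp add: \<eta>_def)
  have "\<eta> * W \<le> e" using e W by (simp add: \<eta>_def field_simps)
  then have "\<kappa> * (\<eta> * (h/2 + 4/h) * V) \<le> e" by (simp add: W_def mult_ac)
  have fin: "emeasure lborel \<Omega> < \<infinity>" using bd emeasure_bounded_finite by blast
  have iE: "set_integrable lborel \<Omega> (\<lambda>z. (norm (G z))\<^sup>2)"
    by (rule set_integrable_continuous_on_closure[OF op bd]) (intro continuous_intros Gc)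
  have iN: "set_integrable lborel \<Omega> (\<lambda>z. (\<psi> z)\<^sup>2)"
    by (rule set_integrable_continuous_on_closure[OF op bd]) (intro continuous_intros psi)
  have "(LINT z:\<Omega>|lborel. (h/2) * (norm (G z))\<^sup>2 + (3/h) * (\<psi> z)\<^sup>2 + \<eta> * (h/2 + 4/h))
      = (h/2) * E + (3/h) * N + \<eta> * (h/2 + 4/h) * V"
  proof -
    have i1: "set_integrable lborel \<Omega> (\<lambda>z. (h/2) * (norm (G z))\<^sup>2)" using iE by (rule set_integrable_mult_right)
    have i2: "set_integrable lborel \<Omega> (\<lambda>z. (3/h) * (\<psi> z)\<^sup>2)" using iN by (rule set_integrable_mult_right)
    have i3: "set_integrable lborel \<Omega> (\<lambda>z. \<eta> * (h/2 + 4/h))"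
      by (rule set_integrable_continuous_on_closure[OF op bd]) (rule continuous_on_const)
    have "(LINT z:\<Omega>|lborel. (h/2) * (norm (G z))\<^sup>2 + (3/h) * (\<psi> z)\<^sup>2 + \<eta> * (h/2 + 4/h))
        = (LINT z:\<Omega>|lborel. (h/2) * (norm (G z))\<^sup>2) + (LINT z:\<Omega>|lborel. (3/h) * (\<psi> z)\<^sup>2)
          + (LINT z:\<Omega>|lborel. \<eta> * (h/2 + 4/h))"
      using set_integral_add(2)[OF set_integral_add(1)[OF i1 i2] i3] set_integral_add(2)[OF i1 i2] by simp
    also have "\<dots> = (h/2) * E + (3/h) * N + \<eta> * (h/2 + 4/h) * V"
      using set_integral_const[of \<Omega> lborel "\<eta> * (h/2 + 4/h)"] op fin by (simp add: E_def N_def V_def mult.commute)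
    finally show ?thesis .
  qed
  then have "(\<integral>\<^sup>+x. ennreal ((\<psi> x)\<^sup>2) * indicator (frontier \<Omega> \<inter> coord_cube x0 (r/2)) x \<partial>surface_measure \<Omega>)
      \<le> ennreal (\<kappa> * ((h/2) * E + (3/h) * N + \<eta> * (h/2 + 4/h) * V))"
    using local_trace_estimate[OF dim psi Gc dpsi h \<eta>] by (simp add: \<kappa>_def)
  also have "\<dots> \<le> ennreal (\<kappa> * ((h/2) * E + (3/h) * N)) + ennreal e"
  proof -
    have "0 \<le> E" "0 \<le> N" unfolding E_def N_def by (simp_all add: set_integral_nonneg)
    then have "0 \<le> \<kappa> * ((h/2) * E + (3/h) * N)" using \<kappa> h by simp
    moreover have "\<kappa> * ((h/2) * E + (3/h) * N + \<eta> * (h/2 + 4/h) * V) \<le> \<kappa> * ((h/2) * E + (3/h) * N) + e"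
      using \<open>\<kappa> * (\<eta> * (h/2 + 4/h) * V) \<le> e\<close> by (simp add: distrib_left)
    ultimately show ?thesis using e by (simp add: ennreal_plus[symmetric] ennreal_leI del: ennreal_plus)
  qed
  finally show "(\<integral>\<^sup>+x. ennreal ((\<psi> x)\<^sup>2) * indicator (frontier \<Omega> \<inter> coord_cube x0 (r/2)) x \<partial>surface_measure \<Omega>)
      \<le> ennreal (\<kappa> * ((h/2) * E + (3/h) * N)) + ennreal e" .
qed

end

lemma boundary_chart_cover:
  fixes \<Omega> :: "'a::euclidean_space set"
  assumes op: "open \<Omega>" and bd: "bounded \<Omega>" and C2d: "C2_defining_function \<Omega> \<rho>"
  obtains P U b \<sigma> r m M
  where "\<And>x0. x0 \<in> P \<Longrightarrow> boundary_chart \<Omega> \<rho> U x0 (b x0) (\<sigma> x0) (r x0) (m x0) (M x0)"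
    and "finite P" "P \<subseteq> frontier \<Omega>" "frontier \<Omega> \<subseteq> (\<Union>x0\<in>P. coord_cube x0 (r x0 / 2))"
proof -
  obtain U where U: "open U" "frontier \<Omega> \<subseteq> U" "C2_on U \<rho>" "\<forall>x\<in>U. x \<in> \<Omega> \<longleftrightarrow> \<rho> x < 0"
     "\<forall>x\<in>frontier \<Omega>. \<rho> x = 0 \<and> grad \<rho> x \<noteq> 0"
    by (rule C2_defining_functionE[OF C2d])
  have "\<exists>q. case q of (b, \<sigma>, r, m, M) \<Rightarrow> boundary_chart \<Omega> \<rho> U x0 b \<sigma> r m M"
    if x0: "x0 \<in> frontier \<Omega>" for x0
  proof -
    obtain b \<sigma> r m M where "b \<in> Basis" "\<sigma> = 1 \<or> \<sigma> = -1" "r > 0" "m > 0" "M > 0" "coord_cube x0 r \<subseteq> U"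
      "\<forall>z\<in>coord_cube x0 r. grad \<rho> z \<bullet> (\<sigma> *\<^sub>R b) \<ge> m \<and> norm (grad \<rho> z) \<le> M"
      using boundary_chart_exists[OF U(3,1), of x0] U(2,5) x0 by blast
    then have "boundary_chart \<Omega> \<rho> U x0 b \<sigma> r m M" unfolding boundary_chart_def using op bd U by blast
    then show ?thesis by (intro exI[of _ "(b, \<sigma>, r, m, M)"]) simp
  qed
  then have "\<forall>x0\<in>frontier \<Omega>. \<exists>q. case q of (b, \<sigma>, r, m, M) \<Rightarrow> boundary_chart \<Omega> \<rho> U x0 b \<sigma> r m M"
    by blast
  from bchoice[OF this]
  obtain q where q: "\<forall>x0\<in>frontier \<Omega>. case q x0 of (b, \<sigma>, r, m, M) \<Rightarrow> boundary_chart \<Omega> \<rho> U x0 b \<sigma> r m M"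
    by blast
  define b where "b x0 = fst (q x0)" for x0
  define \<sigma> where "\<sigma> x0 = fst (snd (q x0))" for x0
  define r where "r x0 = fst (snd (snd (q x0)))" for x0
  define m where "m x0 = fst (snd (snd (snd (q x0))))" for x0
  define M where "M x0 = snd (snd (snd (snd (q x0))))" for x0
  have chart: "boundary_chart \<Omega> \<rho> U x0 (b x0) (\<sigma> x0) (r x0) (m x0) (M x0)" if "x0 \<in> frontier \<Omega>" for x0
    using q that by (simp add: b_def \<sigma>_def r_def m_def M_def case_prod_beta)
  have "compact (frontier \<Omega>)"
    using bd by (meson bounded_closure bounded_subset compact_eq_bounded_closed frontier_closed frontier_subset_closure)
  moreover have "x0 \<in> coord_cube x0 (r x0 / 2)" if "x0 \<in> frontier \<Omega>" for x0
    using boundary_chart.r[OF chart[OF that]] by (simp add: mem_coord_cube)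
  then have "frontier \<Omega> \<subseteq> (\<Union>x0\<in>frontier \<Omega>. coord_cube x0 (r x0 / 2))" by blast
  ultimately obtain P where P: "P \<subseteq> frontier \<Omega>" "finite P" "frontier \<Omega> \<subseteq> (\<Union>x0\<in>P. coord_cube x0 (r x0 / 2))"
    using compactE_image[of "frontier \<Omega>" "frontier \<Omega>" "\<lambda>x0. coord_cube x0 (r x0 / 2)"] open_coord_cube
    by blast
  show ?thesis by (rule that[OF _ P(2,1,3)]) (use chart P(1) in blast)
qed

section \<open>The trace inequality and the main theorem\<close>

lemma trace_inequality:
  fixes \<Omega> :: "'a::euclidean_space set"
  assumes dim: "DIM('a) \<ge> 2" and op: "open \<Omega>" and bd: "bounded \<Omega>" and C2d: "C2_defining_function \<Omega> \<rho>"
  obtains C h0 where "C \<ge> 0" "h0 > 0"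
    "\<And>h \<psi>. 0 < h \<Longrightarrow> h \<le> h0 \<Longrightarrow> C1_closure \<Omega> \<psi> \<Longrightarrow>
       (\<integral>\<^sup>+x. ennreal ((\<psi> x)\<^sup>2) \<partial>surface_measure \<Omega>)
       \<le> ennreal (C * (h * (LINT x:\<Omega>|lborel. (norm (grad \<psi> x))\<^sup>2) + (1/h) * (LINT x:\<Omega>|lborel. (\<psi> x)\<^sup>2)))"
proof -
  obtain P U b \<sigma> r m M
    where chart: "\<And>x0. x0 \<in> P \<Longrightarrow> boundary_chart \<Omega> \<rho> U x0 (b x0) (\<sigma> x0) (r x0) (m x0) (M x0)"
    and P: "finite P" "P \<subseteq> frontier \<Omega>" and cover: "frontier \<Omega> \<subseteq> (\<Union>x0\<in>P. coord_cube x0 (r x0 / 2))"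
    by (rule boundary_chart_cover[OF op bd C2d]) blast
  define \<kappa> where "\<kappa> x0 = graph_cell_const DIM('a) (M x0 / m x0)" for x0
  define C where "C = 3 * (\<Sum>x0\<in>P. \<kappa> x0)"
  define h0 where "h0 = Min (insert 1 ((\<lambda>x0. r x0 / 4) ` P))"
  have \<kappa>: "0 \<le> \<kappa> x0" if "x0 \<in> P" for x0
    using boundary_chart.m[OF chart[OF that]] boundary_chart.M[OF chart[OF that]]
    by (simp add: \<kappa>_def graph_cell_const_nonneg)
  have C: "C \<ge> 0" unfolding C_def using \<kappa> by (simp add: sum_nonneg)
  have h0: "h0 > 0" unfolding h0_def using P boundary_chart.r[OF chart] by (subst Min_gr_iff) auto
  have h0r: "h0 \<le> r x0 / 4" if "x0 \<in> P" for x0 unfolding h0_def using P(1) that by (intro Min_le) auto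
  show ?thesis
  proof (rule that[OF C h0])
    fix h \<psi> assume h: "0 < h" "h \<le> h0" and \<psi>: "C1_closure \<Omega> \<psi>"
    obtain G where G: "continuous_on (closure \<Omega>) G" "\<forall>x\<in>\<Omega>. G x = grad \<psi> x"
      using \<psi> unfolding C1_closure_def by blast
    have psi: "continuous_on (closure \<Omega>) \<psi>" using \<psi> unfolding C1_closure_def by blast
    have dpsi: "(\<psi> has_derivative (\<lambda>v. G y \<bullet> v)) (at y)" if "y \<in> \<Omega>" for y
      using has_derivative_grad[of \<psi> y] \<psi> that G(2) unfolding C1_closure_def by auto
    define E where "E = (LINT x:\<Omega>|lborel. (norm (grad \<psi> x))\<^sup>2)"
    define N where "N = (LINT x:\<Omega>|lborel. (\<psi> x)\<^sup>2)"
    have EN: "0 \<le> E" "0 \<le> N" unfolding E_def N_def by (simp_all add: set_integral_nonneg)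
    have EG: "(LINT x:\<Omega>|lborel. (norm (G x))\<^sup>2) = E"
      unfolding E_def by (rule set_lebesgue_integral_cong) (use G op in auto)
    have "continuous_on (frontier \<Omega>) (\<lambda>x. (\<psi> x)\<^sup>2)"
      by (intro continuous_intros continuous_on_subset[OF psi frontier_subset_closure])
    then have "(\<lambda>x. ennreal ((\<psi> x)\<^sup>2)) \<in> borel_measurable (surface_measure \<Omega>)"
      using borel_measurable_surface_measure by measurable
    then have "(\<integral>\<^sup>+x. ennreal ((\<psi> x)\<^sup>2) \<partial>surface_measure \<Omega>)
        \<le> (\<Sum>x0\<in>P. \<integral>\<^sup>+x. ennreal ((\<psi> x)\<^sup>2) * indicator (frontier \<Omega> \<inter> coord_cube x0 (r x0 / 2)) x \<partial>surface_measure \<Omega>)"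
      using P(1) cover
      by (intro nn_integral_le_sum_cover)
         (auto simp: sets_surface_measure sets_restrict_space_iff open_coord_cube)
    also have "\<dots> \<le> (\<Sum>x0\<in>P. ennreal (\<kappa> x0 * ((h/2) * E + (3/h) * N)))"
    proof (intro sum_mono)
      fix x0 assume x0: "x0 \<in> P"
      show "(\<integral>\<^sup>+x. ennreal ((\<psi> x)\<^sup>2) * indicator (frontier \<Omega> \<inter> coord_cube x0 (r x0 / 2)) x \<partial>surface_measure \<Omega>)
          \<le> ennreal (\<kappa> x0 * ((h/2) * E + (3/h) * N))"
        using boundary_chart.local_trace_inequality[OF chart[OF x0] dim psi G(1) dpsi h(1)] h(2) h0r[OF x0]
        by (simp add: \<kappa>_def EG N_def)
    qed
    also have "\<dots> = ennreal ((\<Sum>x0\<in>P. \<kappa> x0) * ((h/2) * E + (3/h) * N))"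
      using \<kappa> h EN by (simp add: sum_ennreal sum_distrib_right)
    also have "\<dots> \<le> ennreal (C * (h * E + (1/h) * N))"
    proof (intro ennreal_leI)
      have "(h/2) * E + (3/h) * N \<le> 3 * (h * E + (1/h) * N)" using h EN by (simp add: field_simps)
      then have "(\<Sum>x0\<in>P. \<kappa> x0) * ((h/2) * E + (3/h) * N) \<le> (\<Sum>x0\<in>P. \<kappa> x0) * (3 * (h * E + (1/h) * N))"
        by (rule mult_left_mono) (simp add: sum_nonneg \<kappa>)
      then show "(\<Sum>x0\<in>P. \<kappa> x0) * ((h/2) * E + (3/h) * N) \<le> C * (h * E + (1/h) * N)"
        by (simp add: C_def mult_ac)
    qed
    finally show "(\<integral>\<^sup>+x. ennreal ((\<psi> x)\<^sup>2) \<partial>surface_measure \<Omega>) \<le> ennreal (C * (h * E + (1/h) * N))" .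
  qed
qed

lemma bdd_below_curvature_energy:
  fixes \<Omega> :: "'a::euclidean_space set" and \<rho> :: "'a \<Rightarrow> real" and a :: real
  assumes dim: "DIM('a) \<ge> 2" and op: "open \<Omega>" and bd: "bounded \<Omega>"
    and C2d: "C2_defining_function \<Omega> \<rho>" and a: "a \<ge> 0"
  shows "bdd_below {(LINT x:\<Omega>|lborel. (norm (grad \<psi> x))\<^sup>2)
        + a * (LINT x|surface_measure \<Omega>. lowest_curvature \<rho> x * (\<psi> x)\<^sup>2) | \<psi>.
        C1_closure \<Omega> \<psi> \<and> (LINT x:\<Omega>|lborel. (\<psi> x)\<^sup>2) = 1}"
proof -
  obtain K where K: "K \<ge> 0" "\<forall>x\<in>frontier \<Omega>. lowest_curvature \<rho> x \<ge> - K"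
    using lowest_curvature_bounded_below[OF dim bd C2d] by blast
  obtain C h0 where C: "C \<ge> 0" and h0: "h0 > 0" and trace: "\<And>h \<psi>. 0 < h \<Longrightarrow> h \<le> h0 \<Longrightarrow> C1_closure \<Omega> \<psi> \<Longrightarrow>
       (\<integral>\<^sup>+x. ennreal ((\<psi> x)\<^sup>2) \<partial>surface_measure \<Omega>)
       \<le> ennreal (C * (h * (LINT x:\<Omega>|lborel. (norm (grad \<psi> x))\<^sup>2) + (1/h) * (LINT x:\<Omega>|lborel. (\<psi> x)\<^sup>2)))"
    by (rule trace_inequality[OF dim op bd C2d]) blast
  define L where "L = a * K * C"
  define h where "h = min h0 (1 / (L + 1))"
  have L: "0 \<le> L" using a K C by (simp add: L_def)
  have h: "0 < h" "h \<le> h0" using h0 L by (auto simp: h_def)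
  have hL: "L * h \<le> 1"
  proof -
    have "L * h \<le> L * (1 / (L + 1))" using L by (intro mult_left_mono) (auto simp: h_def)
    also have "\<dots> \<le> 1" using L by (simp add: field_simps)
    finally show ?thesis .
  qed
  have "- (L / h) \<le> (LINT x:\<Omega>|lborel. (norm (grad \<psi> x))\<^sup>2)
        + a * (LINT x|surface_measure \<Omega>. lowest_curvature \<rho> x * (\<psi> x)\<^sup>2)"
    if \<psi>: "C1_closure \<Omega> \<psi>" and N: "(LINT x:\<Omega>|lborel. (\<psi> x)\<^sup>2) = 1" for \<psi>
  proof -
    define E where "E = (LINT x:\<Omega>|lborel. (norm (grad \<psi> x))\<^sup>2)"
    have E0: "E \<ge> 0" unfolding E_def by (simp add: set_integral_nonneg)
    have "continuous_on (frontier \<Omega>) (\<lambda>x. (\<psi> x)\<^sup>2)"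
      using \<psi> unfolding C1_closure_def
      by (intro continuous_intros) (meson continuous_on_subset frontier_subset_closure)
    then have meas: "(\<lambda>x. (\<psi> x)\<^sup>2) \<in> borel_measurable (surface_measure \<Omega>)"
      by (rule borel_measurable_surface_measure)
    have "(\<integral>\<^sup>+x. ennreal ((\<psi> x)\<^sup>2) \<partial>surface_measure \<Omega>) \<le> ennreal (C * (h * E + 1 / h))"
      using trace[OF h \<psi>] N by (simp add: E_def)
    moreover have "0 \<le> C * (h * E + 1 / h)" using C h E0 by simp
    ultimately have int: "integrable (surface_measure \<Omega>) (\<lambda>x. (\<psi> x)\<^sup>2)"
      and I: "(LINT x|surface_measure \<Omega>. (\<psi> x)\<^sup>2) \<le> C * (h * E + 1 / h)"
      using integrable_of_nn_integral_le[OF meas] by auto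
    have "- K * (LINT x|surface_measure \<Omega>. (\<psi> x)\<^sup>2) \<le> (LINT x|surface_measure \<Omega>. lowest_curvature \<rho> x * (\<psi> x)\<^sup>2)"
      by (rule integral_mult_ge_neg_bound[OF int]) (use K sets_surface_measure(2) in auto)
    moreover have "- K * (C * (h * E + 1 / h)) \<le> - K * (LINT x|surface_measure \<Omega>. (\<psi> x)\<^sup>2)"
      using I K by (simp add: mult_left_mono)
    ultimately have "a * (- K * (C * (h * E + 1 / h))) \<le> a * (LINT x|surface_measure \<Omega>. lowest_curvature \<rho> x * (\<psi> x)\<^sup>2)"
      using a by (intro mult_left_mono) auto
    moreover have "a * (- K * (C * (h * E + 1 / h))) = - (L * h * E) - L / h"
      using h by (simp add: L_def field_simps)
    moreover have "L * h * E \<le> E" using mult_right_mono[OF hL E0] by simp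
    ultimately show ?thesis unfolding E_def by linarith
  qed
  then show ?thesis by (intro bdd_belowI[of _ "- (L / h)"]) auto
qed

lemma Inf_combination_le:
  fixes E P B :: "'b \<Rightarrow> real" and a S :: real
  assumes T: "T \<noteq> {}" and a: "a \<ge> 1"
    and E: "\<And>\<psi>. \<psi> \<in> T \<Longrightarrow> 0 \<le> E \<psi>" and P: "\<And>\<psi>. \<psi> \<in> T \<Longrightarrow> P \<psi> \<le> S"
    and bdd: "bdd_below ((\<lambda>\<psi>. E \<psi> + a * B \<psi>) ` T)"
  shows "(a - 1) * Inf ((\<lambda>\<psi>. E \<psi> - P \<psi>) ` T) + Inf ((\<lambda>\<psi>. E \<psi> + a * B \<psi>) ` T) - S
           \<le> a * Inf ((\<lambda>\<psi>. E \<psi> - P \<psi> + B \<psi>) ` T)"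
    (is "?X \<le> _")
proof -
  have bdd0: "bdd_below ((\<lambda>\<psi>. E \<psi> - P \<psi>) ` T)"
    using E P by (intro bdd_belowI2[of _ "- S"]) force
  have "?X / a \<le> E \<psi> - P \<psi> + B \<psi>" if \<psi>: "\<psi> \<in> T" for \<psi>
  proof -
    have "(a - 1) * Inf ((\<lambda>\<psi>. E \<psi> - P \<psi>) ` T) \<le> (a - 1) * (E \<psi> - P \<psi>)"
      using cInf_lower[OF imageI[OF \<psi>] bdd0] a by (intro mult_left_mono) auto
    moreover have "Inf ((\<lambda>\<psi>. E \<psi> + a * B \<psi>) ` T) \<le> E \<psi> + a * B \<psi>"
      using cInf_lower[OF imageI[OF \<psi>] bdd] .
    moreover have "a * (E \<psi> - P \<psi> + B \<psi>) = (a - 1) * (E \<psi> - P \<psi>) + (E \<psi> + a * B \<psi>) - P \<psi>"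
      by (simp add: algebra_simps)
    ultimately have "?X \<le> a * (E \<psi> - P \<psi> + B \<psi>)" using P[OF \<psi>] by linarith
    then show ?thesis using a by (simp add: pos_divide_le_eq mult.commute)
  qed
  then have "?X / a \<le> Inf ((\<lambda>\<psi>. E \<psi> - P \<psi> + B \<psi>) ` T)" by (intro cInf_greatest) (use T in auto)
  then show ?thesis using a by (simp add: pos_divide_le_eq mult.commute)
qed

lemma lambda_gamma_lower_bound:
  fixes \<Omega> :: "'a::euclidean_space set" and \<rho> u :: "'a \<Rightarrow> real" and f :: "real \<Rightarrow> real"
  assumes dim: "DIM('a) \<ge> 2" and dom: "domain \<Omega>" and bd: "bounded \<Omega>"
    and C2d: "C2_defining_function \<Omega> \<rho>" and f': "continuous_on UNIV (deriv f)"
    and u: "continuous_on (closure \<Omega>) u" and a: "a \<ge> 1" and S: "\<And>t. deriv f t \<le> S"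
  shows "(a - 1) * lambda0 \<Omega> f u + mu_gamma a \<Omega> \<rho> - S \<le> a * lambda_gamma \<Omega> \<rho> f u"
proof -
  have op: "open \<Omega>" using dom by (simp add: domain_def)
  define T where "T = {\<psi>. C1_closure \<Omega> \<psi> \<and> (LINT x:\<Omega>|lborel. (\<psi> x)\<^sup>2) = 1}"
  define E where "E \<psi> = (LINT x:\<Omega>|lborel. (norm (grad \<psi> x))\<^sup>2)" for \<psi> :: "'a \<Rightarrow> real"
  define P where "P \<psi> = (LINT x:\<Omega>|lborel. deriv f (u x) * (\<psi> x)\<^sup>2)" for \<psi> :: "'a \<Rightarrow> real"
  define B where "B \<psi> = (LINT x|surface_measure \<Omega>. lowest_curvature \<rho> x * (\<psi> x)\<^sup>2)" for \<psi> :: "'a \<Rightarrow> real"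
  have infs: "lambda0 \<Omega> f u = Inf ((\<lambda>\<psi>. E \<psi> - P \<psi>) ` T)"
    "lambda_gamma \<Omega> \<rho> f u = Inf ((\<lambda>\<psi>. E \<psi> - P \<psi> + B \<psi>) ` T)"
    "mu_gamma a \<Omega> \<rho> = Inf ((\<lambda>\<psi>. E \<psi> + a * B \<psi>) ` T)"
    unfolding lambda0_def lambda_gamma_def mu_gamma_def T_def E_def P_def B_def
    by (simp_all add: setcompr_eq_image)
  show ?thesis unfolding infs
  proof (rule Inf_combination_le[OF _ a])
    show "T \<noteq> {}" using exists_normalized_C1_closure[OF dom bd] by (simp add: T_def)
    show "0 \<le> E \<psi>" for \<psi> by (simp add: E_def set_integral_nonneg)
    have "continuous_on (closure \<Omega>) (\<lambda>x. deriv f (u x))"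
      using continuous_on_compose2[OF f' u] by simp
    then show "P \<psi> \<le> S" if "\<psi> \<in> T" for \<psi>
      using set_integral_weight_sq_le[OF op bd, of "\<lambda>x. deriv f (u x)" \<psi> S] S that
      by (simp add: P_def T_def C1_closure_def)
    show "bdd_below ((\<lambda>\<psi>. E \<psi> + a * B \<psi>) ` T)"
      using bdd_below_curvature_energy[OF dim op bd C2d, of a] a
      by (simp add: T_def E_def B_def setcompr_eq_image)
  qed
qed

theorem mainTheorem11:
  fixes \<Omega> :: "'a::euclidean_space set" and \<rho> u :: "'a \<Rightarrow> real"
    and f :: "real \<Rightarrow> real" and a :: real
  assumes "DIM('a) \<ge> 2"
    and "domain \<Omega>" and "bounded \<Omega>"
    and "C2_defining_function \<Omega> \<rho>"
    and "\<forall>t. f differentiable (at t)" and "continuous_on UNIV (deriv f)"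
    and "C2_closure \<Omega> u"
    and "\<forall>x\<in>\<Omega>. - laplacian u x = f (u x)"
    and "\<forall>x\<in>frontier \<Omega>. ((\<lambda>y. grad u y \<bullet> normal \<rho> x) \<longlongrightarrow> 0) (at x within \<Omega>)"
    and "a \<ge> 1"
  shows "ereal (a * lambda_gamma \<Omega> \<rho> f u)
           \<ge> ereal ((a - 1) * lambda0 \<Omega> f u + mu_gamma a \<Omega> \<rho>) - (SUP t. ereal (deriv f t))"
proof -
  have u: "continuous_on (closure \<Omega>) u" using assms(7) by (simp add: C2_closure_def)
  show ?thesis
  proof (cases "SUP t. ereal (deriv f t)")
    case (real S)
    then have "deriv f t \<le> S" for t using SUP_upper[of t UNIV "\<lambda>t. ereal (deriv f t)"] by simp
    then show ?thesis using lambda_gamma_lower_bound[OF assms(1-4,6) u assms(10)] real by simp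
  next
    case MInf
    then show ?thesis using SUP_upper[of 0 UNIV "\<lambda>t. ereal (deriv f t)"] by simp
  qed simp
qed

end
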